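(* Consider problem (P) with $\mathcal{X}_i=\mathbb{R}^{d_i}$ for all $i$, under Assumption 1, and let $\mathcal{G}$ be undirected and connected. Then for any $\alpha,\beta>0$ and any initial point $(\mathbf{x}(0),\boldsymbol\lambda(0),\mathbf{z}(0))\in\mathbb{R}^d\times\mathbb{R}^{np}\times\mathbb{R}^{np}$ with $\sum_{i=1}^n z_i(0)=0$, the trajectory $(\mathbf{x}(t),\boldsymbol\lambda(t),\mathbf{z}(t))$ of IDEA converges to a point $(\mathbf{x}^*,\boldsymbol\lambda^*,\mathbf{z}^* )$ where $\mathbf{x}^*$ is an optimal solution of (P).
   Context: Problem (P): for $i=1,\dots,n$ let $f_i:\mathbb{R}^{d_i}\to\mathbb{R}$, $\mathcal{X}_i\subseteq\mathbb{R}^{d_i}$, $A_i\in\mathbb{R}^{p\times d_i}$, $b\in\mathbb{R}^p$; $d=\sum_i d_i$, $\mathbf{x}=[x_1^\top,\dots,x_n^\top]^\top$, $f(\mathbf{x})=\sum_i f_i(x_i)$, $A=[A_1,\dots,A_n]$, $\mathcal{X}=\prod_i\mathcal{X}_i$; (P) is $\min f(\mathbf{x})$ s.t. $A\mathbf{x}=b$, $\mathbf{x}\in\mathcal{X}$, assumed to have at least one optimal solution. Assumption 1: each $\mathcal{X}_i$ is closed and convex, $f_i$ is convex on $\mathcal{X}_i$ and differentiable on an open set containing $\mathcal{X}_i$ with $\nabla f_i$ locally Lipschitz there, and Slater's condition holds (some relative interior point of $\mathcal{X}$ satisfies $A\mathbf{x}=b$). Graph: weighted graph on $\{1,\dots,n\}$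 with adjacency matrix $[a_{ij}]$ ($a_{ij}>0$ if agent $i$ receives from agent $j$, else $0$); Laplacian $L=D^{out}-[a_{ij}]$, $D^{out}=\mathrm{diag}(\sum_j a_{ij})_i$. Undirected means $a_{ij}=a_{ji}$ for all $i,j$. IDEA: choose $b_1,\dots,b_n\in\mathbb{R}^p$ with $\sum_i b_i=b$; $\mathbf{A}=\mathrm{diag}(A_1,\dots,A_n)\in\mathbb{R}^{np\times d}$, $\mathbf{b}=[b_1^\top,\dots,b_n^\top]^\top$, $\mathbf{L}=L\otimes I_p$, $\nabla f(\mathbf{x})=[\nabla f_1(x_1)^\top,\dots,\nabla f_n(x_n)^\top]^\top$, $\boldsymbol\lambda=[\lambda_1^\top,\dots,\lambda_n^\top]^\top$, $\mathbf{z}=[z_1^\top,\dots,z_n^\top]^\top\in\mathbb{R}^{np}$. IDEA is $\dot{\mathbf{x}}=-\alpha(\nabla f(\mathbf{x})+\mathbf{A}^\top\boldsymbol\lambda)-\mathbf{A}^\top(\mathbf{A}\mathbf{x}-\mathbf{b}-\mathbf{z})$, $\dot{\boldsymbol\lambda}=\mathbf{A}\mathbf{x}-\mathbf{b}-\mathbf{z}-\beta\mathbf{L}\boldsymbol\lambda$, $\dot{\mathbf{z}}=\alpha\beta\mathbf{L}\boldsymbol\lambda$. *)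

theory Defs
  imports "HOL-Analysis.Analysis"
begin

definition loc_lipschitz_on :: "'a::metric_space set \<Rightarrow> ('a \<Rightarrow> 'b::metric_space) \<Rightarrow> bool" where
  "loc_lipschitz_on S g \<longleftrightarrow> (\<forall>x\<in>S. \<exists>e>0. \<exists>L. L-lipschitz_on (ball x e \<inter> S) g)"

definition undirected_graph :: "nat \<Rightarrow> (nat \<Rightarrow> nat \<Rightarrow> real) \<Rightarrow> bool" where
  "undirected_graph n a \<longleftrightarrow> (\<forall>i<n. \<forall>j<n. a i j \<ge> 0 \<and> a i j = a j i)"

definition graph_connected :: "nat \<Rightarrow> (nat \<Rightarrow> nat \<Rightarrow> real) \<Rightarrow> bool" where
  "graph_connected n a \<longleftrightarrow>
     (\<forall>i<n. \<forall>j<n. (\<lambda>u v. u < n \<and> v < n \<and> a u v > 0)\<^sup>*\<^sup>* i j)"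

text \<open>Block i of the Laplacian applied to a stacked vector: (L (x) I_p) lam, block i.\<close>
definition lap :: "nat \<Rightarrow> (nat \<Rightarrow> nat \<Rightarrow> real) \<Rightarrow> (nat \<Rightarrow> 'p::real_vector) \<Rightarrow> nat \<Rightarrow> 'p" where
  "lap n a lam i = (\<Sum>j<n. a i j *\<^sub>R (lam i - lam j))"

end

theory Submission
  imports Defs "Jordan_Normal_Form.Determinant"
begin

text \<open>Take a KKT pair (x*, mu*) of (P), set z*_i = A_i x* - b_i, and choose a potential W with
  L W = z - z* and W' = \<alpha>\<beta> \<lambda>; it exists because z - z* has zero sum. The function
    V = |x - x*|^2 / 2 + \<Sum>_i |\<alpha> (\<lambda>_i - mu*) + z_i - z*_i|^2 / (2\<alpha>) + <W, L W> / (2\<beta>)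
  satisfies V' = - (\<alpha> <x - x*, grad f(x) - grad f(x*)> + \<Sum>_i |A_i x - b_i - z_i|^2) \<le> 0.
  Hence the trajectory is bounded and uniformly continuous, and Barbalat's lemma makes both this
  dissipation and the time derivative of the residuals A_i x - b_i - z_i tend to 0. At a cluster
  point the first limit yields an optimal x, and the second one forces the multipliers into
  consensus, so that the cluster point is itself a KKT pair. Recentred at this pair, V decreases
  and tends to 0 along the cluster sequence, hence tends to 0, and so the whole trajectory
  converges.\<close>

no_notation Matrix.scalar_prod (infix \<open>\<bullet>\<close> 70)

section \<open>Analysis on the half-line\<close>

lemma DERIV_within_nonpos_imp_decreasing:
  fixes V D :: "real \<Rightarrow> real"
  assumes "0 \<le> s" "s \<le> t"
    and der: "\<And>r. r \<in> {s..t} \<Longrightarrow> (V has_real_derivative D r) (at r within {0..})"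
    and nonpos: "\<And>r. r \<in> {s..t} \<Longrightarrow> D r \<le> 0"
  shows "V t \<le> V s"
proof (rule DERIV_nonpos_imp_decreasing_open[OF \<open>s \<le> t\<close>])
  have "continuous (at r within {s..t}) V" if "r \<in> {s..t}" for r
    by (rule continuous_within_subset[OF DERIV_continuous[OF der[OF that]]]) (use assms(1) in auto)
  then show "continuous_on {s..t} V"
    by (simp add: continuous_on_eq_continuous_within)
  fix r assume r: "s < r" "r < t"
  then have "at r within {0..} = at r"
    using assms(1) by (intro at_within_interior) auto
  then show "\<exists>y. DERIV V r :> y \<and> y \<le> 0"
    using der[of r] nonpos[of r] r by auto
qed

lemmas has_vector_derivative_scaleR_right = bounded_linear.has_vector_derivative[OF bounded_linear_scaleR_right]
lemmas has_vector_derivative_matrix_vector_mult = bounded_linear.has_vector_derivative[OF matrix_vector_mul_bounded_linear]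

lemma has_vector_derivative_zero_imp_const:
  fixes f :: "real \<Rightarrow> 'a::real_normed_vector"
  assumes "\<And>t. t \<ge> 0 \<Longrightarrow> (f has_vector_derivative 0) (at t within {0..})" "t \<ge> 0"
  shows "f t = f 0"
proof -
  have "\<exists>c. \<forall>s\<in>{0::real..}. f s = c"
    by (rule has_derivative_zero_constant) (use assms(1) in \<open>auto simp: has_vector_derivative_def\<close>)
  then show ?thesis
    using assms(2) by force
qed

lemma primitive_exists:
  fixes u :: "real \<Rightarrow> 'a::banach"
  assumes "\<And>t. t \<ge> 0 \<Longrightarrow> (u has_vector_derivative u' t) (at t within {0..})"
  obtains P where "P 0 = 0" "\<And>t. t \<ge> 0 \<Longrightarrow> (P has_vector_derivative u t) (at t within {0..})"
proof -
  have cont: "continuous_on {0..} u"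
    using assms by (intro continuous_on_vector_derivative) auto
  have "((\<lambda>t. integral {0..t} u) has_vector_derivative u t) (at t within {0..})" if "t \<ge> 0" for t
  proof -
    have "((\<lambda>t. integral {0..t} u) has_vector_derivative u t) (at t within {0..t+1})"
      using that by (intro integral_has_vector_derivative continuous_on_subset[OF cont]) auto
    moreover have "at t within {0..} = at t within {0..t+1}"
      by (rule at_within_nhd[of _ "{..<t+1}"]) (use that in auto)
    ultimately show ?thesis
      by simp
  qed
  then show ?thesis
    by (intro that[of "\<lambda>t. integral {0..t} u"]) auto
qed

lemma has_real_derivative_inner:
  fixes u v :: "real \<Rightarrow> 'a::real_inner"
  assumes "(u has_vector_derivative u') (at t within S)" "(v has_vector_derivative v') (at t within S)"
  shows "((\<lambda>s. u s \<bullet> v s) has_real_derivative (u' \<bullet> v t + u t \<bullet> v')) (at t within S)"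
proof -
  have "((\<lambda>s. u s \<bullet> v s) has_derivative (\<lambda>h. u t \<bullet> (h *\<^sub>R v') + (h *\<^sub>R u') \<bullet> v t)) (at t within S)"
    using has_derivative_inner[OF assms[unfolded has_vector_derivative_def]] .
  moreover have "(\<lambda>h. u t \<bullet> (h *\<^sub>R v') + (h *\<^sub>R u') \<bullet> v t) = (*) (u' \<bullet> v t + u t \<bullet> v')"
    by (rule ext) (simp add: algebra_simps)
  ultimately show ?thesis
    unfolding has_field_derivative_def by simp
qed

lemma has_real_derivative_norm_power2:
  fixes u :: "real \<Rightarrow> 'a::real_inner"
  assumes "(u has_vector_derivative u') (at t within S)"
  shows "((\<lambda>s. (norm (u s))\<^sup>2) has_real_derivative (2 * (u t \<bullet> u'))) (at t within S)"
  using has_real_derivative_inner[OF assms assms] by (simp add: power2_norm_eq_inner inner_commute)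

lemma has_real_derivative_along_line:
  fixes \<phi> :: "'a::real_inner \<Rightarrow> real"
  assumes "(\<phi> has_derivative (\<lambda>h. \<gamma> \<bullet> h)) (at u)"
  shows "((\<lambda>s. \<phi> (u + s *\<^sub>R d)) has_real_derivative \<gamma> \<bullet> d) (at 0)"
proof -
  have "((\<lambda>s. \<phi> (u + s *\<^sub>R d)) has_derivative (\<lambda>s. \<gamma> \<bullet> (s *\<^sub>R d))) (at 0)"
    using assms by (intro has_derivative_compose[of "\<lambda>s. u + s *\<^sub>R d" _ 0 UNIV \<phi>])
      (auto intro!: derivative_eq_intros)
  moreover have "(\<lambda>s. \<gamma> \<bullet> (s *\<^sub>R d)) = (*) (\<gamma> \<bullet> d)"
    by (rule ext) simp
  ultimately show ?thesis
    by (simp add: has_field_derivative_def)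
qed

lemma convex_on_ge_tangent:
  fixes \<phi> :: "'a::real_inner \<Rightarrow> real"
  assumes "convex_on UNIV \<phi>" "(\<phi> has_derivative (\<lambda>h. \<gamma> \<bullet> h)) (at u)"
  shows "\<phi> u + \<gamma> \<bullet> (v - u) \<le> \<phi> v"
proof -
  define \<psi> where "\<psi> s = \<phi> (u + s *\<^sub>R (v - u))" for s :: real
  have "convex_on UNIV \<psi>"
  proof (rule convex_onI)
    fix t s1 s2 :: real assume "0 < t" "t < 1"
    have eq: "u + ((1 - t) *\<^sub>R s1 + t *\<^sub>R s2) *\<^sub>R (v - u)
        = (1 - t) *\<^sub>R (u + s1 *\<^sub>R (v - u)) + t *\<^sub>R (u + s2 *\<^sub>R (v - u))"
      by (simp add: algebra_simps)
    show "\<psi> ((1 - t) *\<^sub>R s1 + t *\<^sub>R s2) \<le> (1 - t) * \<psi> s1 + t * \<psi> s2"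
      unfolding \<psi>_def eq using \<open>0 < t\<close> \<open>t < 1\<close> by (intro convex_onD[OF assms(1)]) auto
  qed simp
  moreover have "(\<psi> has_real_derivative \<gamma> \<bullet> (v - u)) (at 0 within UNIV)"
    unfolding \<psi>_def using has_real_derivative_along_line[OF assms(2)] by simp
  ultimately have "\<gamma> \<bullet> (v - u) * (1 - 0) \<le> \<psi> 1 - \<psi> 0"
    by (intro convex_on_imp_above_tangent) auto
  then show ?thesis
    unfolding \<psi>_def by simp
qed

lemma gradient_orthogonal_if_min_along_line:
  fixes \<phi> :: "'a::real_inner \<Rightarrow> real"
  assumes "(\<phi> has_derivative (\<lambda>h. \<gamma> \<bullet> h)) (at u)" "\<And>s. \<phi> u \<le> \<phi> (u + s *\<^sub>R d)"
  shows "\<gamma> \<bullet> d = 0"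
proof (rule DERIV_local_min[OF has_real_derivative_along_line[OF assms(1)]])
  show "\<forall>y. \<bar>0 - y\<bar> < 1 \<longrightarrow> \<phi> (u + 0 *\<^sub>R d) \<le> \<phi> (u + y *\<^sub>R d)"
    using assms(2) by simp
qed simp

lemma bounded_const_comp: "bounded ((\<lambda>x. c::'a::real_normed_vector) ` S)"
  unfolding bounded_iff by (intro exI[of _ "norm c"]) auto

lemma bounded_linear_comp:
  assumes "bounded_linear L" "bounded (f ` S)"
  shows "bounded ((\<lambda>x. L (f x)) ` S)"
  using bounded_linear_image[OF assms(2,1)] by (simp add: image_image)

lemma bounded_sum_comp:
  fixes f :: "'i \<Rightarrow> 'a \<Rightarrow> 'b::real_normed_vector"
  assumes "\<And>i. i \<in> I \<Longrightarrow> bounded (f i ` S)"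
  shows "bounded ((\<lambda>x. \<Sum>i\<in>I. f i x) ` S)"
  using assms
proof (induction I rule: infinite_finite_induct)
  case (insert i I)
  then show ?case
    by (simp add: bounded_plus_comp)
qed (simp_all add: bounded_const_comp)

lemma bounded_continuous_comp:
  fixes u :: "'a \<Rightarrow> 'b::euclidean_space" and G :: "'b \<Rightarrow> 'c::real_normed_vector"
  assumes "bounded (u ` S)" "continuous_on UNIV G"
  shows "bounded ((\<lambda>t. G (u t)) ` S)"
proof -
  obtain B where "\<And>t. t \<in> S \<Longrightarrow> norm (u t) \<le> B"
    using assms(1) by (auto simp: bounded_iff)
  then have "u ` S \<subseteq> cball 0 B"
    by auto
  then have "(\<lambda>t. G (u t)) ` S \<subseteq> G ` cball 0 B"
    by auto
  moreover have "compact (G ` cball 0 B)"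
    by (rule compact_continuous_image) (auto intro: continuous_on_subset[OF assms(2)])
  ultimately show ?thesis
    using bounded_subset compact_imp_bounded by blast
qed

lemma uniformly_continuous_on_continuous_comp:
  fixes u :: "'a::metric_space \<Rightarrow> 'b::euclidean_space" and G :: "'b \<Rightarrow> 'c::real_normed_vector"
  assumes "uniformly_continuous_on S u" "bounded (u ` S)" "continuous_on UNIV G"
  shows "uniformly_continuous_on S (\<lambda>t. G (u t))"
proof -
  obtain B where "\<And>t. t \<in> S \<Longrightarrow> norm (u t) \<le> B"
    using assms(2) by (auto simp: bounded_iff)
  then have sub: "u ` S \<subseteq> cball 0 B"
    by auto
  have "uniformly_continuous_on (cball 0 B) G"
    by (rule compact_uniformly_continuous) (auto intro: continuous_on_subset[OF assms(3)])
  then have "uniformly_continuous_on (u ` S) G"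
    unfolding uniformly_continuous_on_def
  proof (intro allI impI)
    fix e :: real
    assume "\<forall>e>0. \<exists>d>0. \<forall>x\<in>cball 0 B. \<forall>x'\<in>cball 0 B. dist x' x < d \<longrightarrow> dist (G x') (G x) < e" "e > 0"
    then obtain d where "d > 0" "\<forall>x\<in>cball 0 B. \<forall>x'\<in>cball 0 B. dist x' x < d \<longrightarrow> dist (G x') (G x) < e"
      by blast
    then show "\<exists>d>0. \<forall>x\<in>u ` S. \<forall>x'\<in>u ` S. dist x' x < d \<longrightarrow> dist (G x') (G x) < e"
      using sub by (intro exI[of _ d]) blast
  qed
  then show ?thesis
    using uniformly_continuous_on_compose[OF assms(1)] by (simp add: o_def)
qed

lemma uniformly_continuous_on_inner:
  fixes u v :: "'a::metric_space \<Rightarrow> 'b::real_inner"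
  assumes "uniformly_continuous_on S u" "uniformly_continuous_on S v"
    and "bounded (u ` S)" "bounded (v ` S)"
  shows "uniformly_continuous_on S (\<lambda>t. u t \<bullet> v t)"
  unfolding uniformly_continuous_on_def
proof (intro allI impI)
  obtain Bu where Bu: "Bu > 0" "\<And>t. t \<in> S \<Longrightarrow> norm (u t) \<le> Bu"
    using assms(3) by (auto simp: bounded_pos)
  obtain Bv where Bv: "Bv > 0" "\<And>t. t \<in> S \<Longrightarrow> norm (v t) \<le> Bv"
    using assms(4) by (auto simp: bounded_pos)
  fix e :: real assume "e > 0"
  have "e / (2 * Bv) > 0" "e / (2 * Bu) > 0"
    using \<open>e > 0\<close> Bu(1) Bv(1) by simp_all
  obtain d1 where "d1 > 0"
    and "\<forall>x\<in>S. \<forall>x'\<in>S. dist x' x < d1 \<longrightarrow> dist (u x') (u x) < e / (2 * Bv)"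
    using assms(1) \<open>e / (2 * Bv) > 0\<close> unfolding uniformly_continuous_on_def by blast
  moreover obtain d2 where "d2 > 0"
    and "\<forall>x\<in>S. \<forall>x'\<in>S. dist x' x < d2 \<longrightarrow> dist (v x') (v x) < e / (2 * Bu)"
    using assms(2) \<open>e / (2 * Bu) > 0\<close> unfolding uniformly_continuous_on_def by blast
  ultimately have d1: "\<And>x x'. x \<in> S \<Longrightarrow> x' \<in> S \<Longrightarrow> dist x' x < d1 \<Longrightarrow> norm (u x' - u x) < e / (2 * Bv)"
    and d2: "\<And>x x'. x \<in> S \<Longrightarrow> x' \<in> S \<Longrightarrow> dist x' x < d2 \<Longrightarrow> norm (v x' - v x) < e / (2 * Bu)"
    by (simp_all add: dist_norm)
  have "dist (u x' \<bullet> v x') (u x \<bullet> v x) < e"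
    if "x \<in> S" "x' \<in> S" "dist x' x < min d1 d2" for x x'
  proof -
    have n1: "norm (u x' - u x) < e / (2 * Bv)" and n2: "norm (v x' - v x) < e / (2 * Bu)"
      using d1[OF that(1,2)] d2[OF that(1,2)] that(3) by auto
    have "\<bar>u x' \<bullet> v x' - u x \<bullet> v x\<bar> = \<bar>(u x' - u x) \<bullet> v x' + u x \<bullet> (v x' - v x)\<bar>"
      by (simp add: algebra_simps)
    also have "\<dots> \<le> norm (u x' - u x) * norm (v x') + norm (u x) * norm (v x' - v x)"
      by (rule order_trans[OF abs_triangle_ineq add_mono[OF Cauchy_Schwarz_ineq2 Cauchy_Schwarz_ineq2]])
    also have "\<dots> \<le> norm (u x' - u x) * Bv + Bu * norm (v x' - v x)"
      using Bu(2)[OF that(1)] Bv(2)[OF that(2)] by (intro add_mono mult_left_mono mult_right_mono) auto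
    also have "\<dots> < (e / (2 * Bv)) * Bv + Bu * (e / (2 * Bu))"
      using n1 n2 Bu(1) Bv(1) by (intro add_strict_mono mult_strict_left_mono mult_strict_right_mono)
    also have "\<dots> = e"
      using Bu(1) Bv(1) by (simp add: field_simps)
    finally show ?thesis
      by (simp add: dist_real_def)
  qed
  then show "\<exists>d>0. \<forall>x\<in>S. \<forall>x'\<in>S. dist x' x < d \<longrightarrow> dist (u x' \<bullet> v x') (u x \<bullet> v x) < e"
    using \<open>d1 > 0\<close> \<open>d2 > 0\<close> by (intro exI[of _ "min d1 d2"]) auto
qed

lemma uniformly_continuous_on_if_vector_derivative_bounded:
  fixes f :: "real \<Rightarrow> 'a::real_normed_vector"
  assumes "convex S" "\<And>t. t \<in> S \<Longrightarrow> (f has_vector_derivative f' t) (at t within S)"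
    and "\<And>t. t \<in> S \<Longrightarrow> norm (f' t) \<le> B"
  shows "uniformly_continuous_on S f"
proof -
  have "(max B 0)-lipschitz_on S f"
  proof (rule bounded_derivative_imp_lipschitz[of S f "\<lambda>t h. h *\<^sub>R f' t"])
    show "(f has_derivative (\<lambda>h. h *\<^sub>R f' t)) (at t within S)" if "t \<in> S" for t
      using assms(2)[OF that] by (simp add: has_vector_derivative_def)
    show "onorm (\<lambda>h. h *\<^sub>R f' t) \<le> max B 0" if "t \<in> S" for t
      using assms(3)[OF that] by (simp add: onorm_scaleR_left[OF bounded_linear_ident] onorm_id)
  qed (simp_all add: assms(1))
  then show ?thesis
    by (rule lipschitz_on_uniformly_continuous)
qed

lemma antimono_bounded_below_tendsto:
  fixes V :: "real \<Rightarrow> real"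
  assumes "\<And>s t. 0 \<le> s \<Longrightarrow> s \<le> t \<Longrightarrow> V t \<le> V s" "\<And>t. 0 \<le> t \<Longrightarrow> B \<le> V t"
  shows "(V \<longlongrightarrow> (INF t\<in>{0..}. V t)) at_top"
proof (rule decreasing_tendsto)
  have bdd: "bdd_below (V ` {0..})"
    using assms(2) by (rule bdd_belowI2[where m = B]) simp
  then show "\<forall>\<^sub>F t in at_top. (INF t\<in>{0..}. V t) \<le> V t"
    unfolding eventually_at_top_linorder by (auto intro!: exI[of _ 0] cINF_lower)
  fix c assume "(INF t\<in>{0..}. V t) < c"
  then obtain T where "T \<ge> 0" "V T < c"
    using cINF_less_iff[OF _ bdd] by auto
  then have "V t < c" if "t \<ge> T" for t
    using assms(1)[of T t] that by simp
  then show "\<forall>\<^sub>F t in at_top. V t < c"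
    unfolding eventually_at_top_linorder by blast
qed

lemma antimono_tendsto_0_if_tendsto_0_along:
  fixes V :: "real \<Rightarrow> real"
  assumes "\<And>s t. 0 \<le> s \<Longrightarrow> s \<le> t \<Longrightarrow> V t \<le> V s" "\<And>t. 0 \<le> t \<Longrightarrow> 0 \<le> V t"
    and "filterlim tk at_top sequentially" "(\<lambda>k. V (tk k)) \<longlonglongrightarrow> 0"
  shows "(V \<longlongrightarrow> 0) at_top"
proof -
  have lim: "(V \<longlongrightarrow> (INF t\<in>{0..}. V t)) at_top"
    using assms(1,2) by (rule antimono_bounded_below_tendsto)
  then have "(\<lambda>k. V (tk k)) \<longlonglongrightarrow> (INF t\<in>{0..}. V t)"
    using filterlim_compose[OF _ assms(3)] by blast
  then have "(INF t\<in>{0..}. V t) = 0"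
    using assms(4) by (rule LIMSEQ_unique)
  then show ?thesis
    using lim by simp
qed

text \<open>Barbalat's lemma. By uniform continuity, a large derivative at a late time stays large on a
  short interval after it, and the function would move there by more than its eventual size.\<close>
lemma barbalat:
  fixes e :: "real \<Rightarrow> 'a::real_normed_vector"
  assumes lim: "(e \<longlongrightarrow> 0) at_top"
    and der: "\<And>t. t \<ge> 0 \<Longrightarrow> (e has_vector_derivative e' t) (at t within {0..})"
    and uc: "uniformly_continuous_on {0..} e'"
  shows "(e' \<longlongrightarrow> 0) at_top"
proof (rule tendstoI)
  fix \<epsilon> :: real assume "\<epsilon> > 0"
  then obtain d where "d > 0"
    and "\<forall>t\<in>{0..}. \<forall>s\<in>{0..}. dist s t < d \<longrightarrow> dist (e' s) (e' t) < \<epsilon> / 2"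
    using uc unfolding uniformly_continuous_on_def by (meson half_gt_zero)
  then have d: "\<And>s t. s \<ge> 0 \<Longrightarrow> t \<ge> 0 \<Longrightarrow> dist s t < d \<Longrightarrow> norm (e' s - e' t) < \<epsilon> / 2"
    by (simp add: dist_norm)
  define \<delta> where "\<delta> = d / 2"
  have "\<delta> > 0" "\<delta> < d"
    using \<open>d > 0\<close> by (auto simp: \<delta>_def)
  have "\<forall>\<^sub>F t in at_top. norm (e t) < \<delta> * \<epsilon> / 4"
    using tendsto_norm_zero[OF lim] by (rule order_tendstoD(2)) (use \<open>\<epsilon> > 0\<close> \<open>\<delta> > 0\<close> in simp)
  then obtain T where T: "\<And>t. t \<ge> T \<Longrightarrow> norm (e t) < \<delta> * \<epsilon> / 4"
    by (auto simp: eventually_at_top_linorder)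
  have "norm (e' t) < \<epsilon>" if t: "t \<ge> max T 0" for t
  proof -
    have "norm (e (t + \<delta>) - e t - ((t + \<delta>) - t) *\<^sub>R e' t) \<le> norm ((t + \<delta>) - t) * (\<epsilon> / 2)"
    proof (rule vector_differentiable_bound_linearization[of "{t..t + \<delta>}"])
      show "(e has_vector_derivative e' s) (at s within {t..t + \<delta>})" if "s \<in> {t..t + \<delta>}" for s
        using der[of s] that t by (auto intro: has_vector_derivative_within_subset)
      show "norm (e' s - e' t) \<le> \<epsilon> / 2" if "s \<in> {t..t + \<delta>}" for s
        using d[of s t] that t \<open>\<delta> < d\<close> by (auto simp: dist_real_def)
    qed (use \<open>\<delta> > 0\<close> in \<open>auto simp: closed_segment_eq_real_ivl\<close>)
    moreover have "norm (\<delta> *\<^sub>R e' t) \<le> norm (e (t + \<delta>) - e t) + norm (e (t + \<delta>) - e t - \<delta> *\<^sub>R e' t)"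
      using norm_triangle_ineq4[of "e (t + \<delta>) - e t" "e (t + \<delta>) - e t - \<delta> *\<^sub>R e' t"] by simp
    moreover have "norm (e (t + \<delta>) - e t) \<le> norm (e (t + \<delta>)) + norm (e t)"
      by (rule norm_triangle_ineq4)
    ultimately have "\<delta> * norm (e' t) \<le> norm (e (t + \<delta>)) + norm (e t) + \<delta> * (\<epsilon> / 2)"
      using \<open>\<delta> > 0\<close> by simp
    also have "\<dots> < \<delta> * \<epsilon>"
      using T[of t] T[of "t + \<delta>"] t \<open>\<delta> > 0\<close> by simp
    finally show ?thesis
      using \<open>\<delta> > 0\<close> by simp
  qed
  then show "\<forall>\<^sub>F t in at_top. dist (e' t) 0 < \<epsilon>"
    unfolding eventually_at_top_linorder by (intro exI[of _ "max T 0"]) simp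
qed

lemma barbalat_integral:
  fixes V h :: "real \<Rightarrow> real"
  assumes der: "\<And>t. t \<ge> 0 \<Longrightarrow> (V has_real_derivative - h t) (at t within {0..})"
    and "\<And>t. t \<ge> 0 \<Longrightarrow> 0 \<le> h t" "\<And>t. t \<ge> 0 \<Longrightarrow> 0 \<le> V t"
    and "uniformly_continuous_on {0..} h"
  shows "(h \<longlongrightarrow> 0) at_top"
proof -
  define L where "L = (INF t\<in>{0..}. V t)"
  have "(V \<longlongrightarrow> L) at_top"
    unfolding L_def
  proof (rule antimono_bounded_below_tendsto)
    show "V t \<le> V s" if "0 \<le> s" "s \<le> t" for s t
      using that assms(2) by (intro DERIV_within_nonpos_imp_decreasing[OF that der]) auto
  qed (use assms(3) in auto)
  then have "((\<lambda>t. V t - L) \<longlongrightarrow> 0) at_top"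
    by (rule LIM_zero)
  moreover have "((\<lambda>t. V t - L) has_vector_derivative - h t) (at t within {0..})" if "t \<ge> 0" for t
    using der[OF that] by (auto intro!: derivative_eq_intros simp: has_real_derivative_iff_has_vector_derivative[symmetric])
  moreover have "uniformly_continuous_on {0..} (\<lambda>t. - h t)"
    using assms(4) by (rule uniformly_continuous_on_minus)
  ultimately have "((\<lambda>t. - h t) \<longlongrightarrow> 0) at_top"
    by (rule barbalat)
  then show ?thesis
    using tendsto_minus_cancel_left by force
qed

lemma bounded_imp_convergent_subsequence_family:
  fixes X :: "nat \<Rightarrow> 'a::heine_borel" and Y :: "nat \<Rightarrow> nat \<Rightarrow> 'b::heine_borel"
  assumes "bounded (range X)" "\<And>i. i < m \<Longrightarrow> bounded (range (\<lambda>k. Y k i))"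
  shows "\<exists>r l ly. strict_mono r \<and> (X \<circ> r) \<longlonglongrightarrow> l \<and> (\<forall>i<m. (\<lambda>k. Y (r k) i) \<longlonglongrightarrow> ly i)"
  using assms(2)
proof (induction m)
  case 0
  then show ?case
    using bounded_imp_convergent_subsequence[OF assms(1)] by blast
next
  case (Suc m)
  have "\<exists>r l ly. strict_mono r \<and> (X \<circ> r) \<longlonglongrightarrow> l \<and> (\<forall>i<m. (\<lambda>k. Y (r k) i) \<longlonglongrightarrow> ly i)"
    by (rule Suc.IH) (use Suc.prems in simp)
  then obtain r l ly where r: "strict_mono r" "(X \<circ> r) \<longlonglongrightarrow> l" "\<forall>i<m. (\<lambda>k. Y (r k) i) \<longlonglongrightarrow> ly i"
    by blast
  have "bounded (range (\<lambda>k. Y (r k) m))"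
    by (rule bounded_subset[OF Suc.prems[of m]]) auto
  then obtain r' l' where r': "strict_mono r'" "((\<lambda>k. Y (r k) m) \<circ> r') \<longlonglongrightarrow> l'"
    using bounded_imp_convergent_subsequence by blast
  have "(\<lambda>k. Y ((r \<circ> r') k) i) \<longlonglongrightarrow> (ly(m := l')) i" if "i < Suc m" for i
  proof (cases "i = m")
    case False
    then have "(\<lambda>k. Y (r k) i) \<longlonglongrightarrow> ly i"
      using r(3) that by simp
    then show ?thesis
      using LIMSEQ_subseq_LIMSEQ[OF _ r'(1)] False by (simp add: o_def)
  qed (use r'(2) in \<open>simp add: o_def\<close>)
  moreover have "(X \<circ> (r \<circ> r')) \<longlonglongrightarrow> l"
    using LIMSEQ_subseq_LIMSEQ[OF r(2) r'(1)] by (simp add: o_assoc)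
  ultimately show ?case
    using strict_mono_o[OF r(1) r'(1)] by blast
qed

lemma tendsto_if_norm_power2_le:
  fixes u :: "real \<Rightarrow> 'a::real_normed_vector"
  assumes "\<And>t. t \<ge> 0 \<Longrightarrow> (norm (u t - c))\<^sup>2 \<le> K * V t" "(V \<longlongrightarrow> 0) at_top"
  shows "(u \<longlongrightarrow> c) at_top"
proof -
  have "((\<lambda>t. sqrt (K * V t)) \<longlongrightarrow> 0) at_top"
    using tendsto_real_sqrt[OF tendsto_mult_right_zero[OF assms(2)]] by simp
  moreover have "\<forall>\<^sub>F t in at_top. norm (u t - c) \<le> sqrt (K * V t)"
    unfolding eventually_at_top_linorder using assms(1) by (auto intro!: exI[of _ 0] real_le_rsqrt)
  ultimately have "((\<lambda>t. u t - c) \<longlongrightarrow> 0) at_top"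
    by (rule Lim_null_comparison[rotated])
  then show ?thesis
    by (rule LIM_zero_cancel)
qed

section \<open>Graph Laplacian\<close>

lemma lap_cong: "(\<And>j. j < n \<Longrightarrow> u j = w j) \<Longrightarrow> i < n \<Longrightarrow> lap n a u i = lap n a w i"
  unfolding lap_def by (intro sum.cong) auto

lemma lap_scaleR: "lap n a (\<lambda>j. c *\<^sub>R w j) i = c *\<^sub>R lap n a w i"
  unfolding lap_def by (simp add: scaleR_sum_right scaleR_diff_right mult.commute)

lemma lap_diff_const: "lap n a (\<lambda>j. w j - c) i = lap n a w i"
  unfolding lap_def by simp

lemma has_vector_derivative_lap:
  assumes "\<And>j. j < n \<Longrightarrow> ((\<lambda>s. w s j) has_vector_derivative w' j) F" and "i < n"
  shows "((\<lambda>s. lap n a (w s) i) has_vector_derivative lap n a w' i) F"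
  unfolding lap_def
  by (intro has_vector_derivative_sum has_vector_derivative_diff has_vector_derivative_scaleR_right assms)
    auto

lemma tendsto_lap:
  fixes w :: "'k \<Rightarrow> nat \<Rightarrow> 'v::real_normed_vector"
  assumes "\<And>j. j < n \<Longrightarrow> ((\<lambda>k. w k j) \<longlongrightarrow> l j) F" and "i < n"
  shows "((\<lambda>k. lap n a (w k) i) \<longlongrightarrow> lap n a l i) F"
  unfolding lap_def by (intro tendsto_sum tendsto_scaleR tendsto_const tendsto_diff assms) auto

definition lap_form :: "nat \<Rightarrow> (nat \<Rightarrow> nat \<Rightarrow> real) \<Rightarrow> (nat \<Rightarrow> 'v::real_inner) \<Rightarrow> real" where
  "lap_form n a w = (\<Sum>i<n. w i \<bullet> lap n a w i)"

definition lap_avg_mat :: "nat \<Rightarrow> (nat \<Rightarrow> nat \<Rightarrow> real) \<Rightarrow> real mat" where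
  "lap_avg_mat n a = mat n n (\<lambda>(i, j). (if i = j then (\<Sum>k<n. a i k) else 0) - a i j + 1 / real n)"

lemma lap_avg_mat_carrier: "lap_avg_mat n a \<in> carrier_mat n n"
  unfolding lap_avg_mat_def by simp

lemma lap_avg_mat_mult_vec:
  assumes "v \<in> carrier_vec n" "i < n"
  shows "(lap_avg_mat n a *\<^sub>v v) $ i = lap n a (\<lambda>j. v $ j) i + (\<Sum>j<n. v $ j) / real n"
proof -
  have "(lap_avg_mat n a *\<^sub>v v) $ i
      = (\<Sum>j<n. ((if i = j then (\<Sum>k<n. a i k) else 0) - a i j + 1 / real n) * v $ j)"
    using assms unfolding lap_avg_mat_def row_def lessThan_atLeast0
    by (auto simp: scalar_prod_def intro!: sum.cong)
  also have "\<dots> = (\<Sum>j<n. (if i = j then (\<Sum>k<n. a i k) else 0) * v $ j)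
      - (\<Sum>j<n. a i j * v $ j) + (\<Sum>j<n. v $ j) / real n"
    by (simp add: algebra_simps sum.distrib sum_subtractf sum_divide_distrib)
  also have "(\<Sum>j<n. (if i = j then (\<Sum>k<n. a i k) else 0) * v $ j) = (\<Sum>k<n. a i k) * v $ i"
  proof -
    have "(\<Sum>j<n. (if i = j then (\<Sum>k<n. a i k) else 0) * v $ j)
        = (\<Sum>j<n. if i = j then (\<Sum>k<n. a i k) * v $ j else 0)"
      by (intro sum.cong) auto
    then show ?thesis
      using assms(2) by (simp add: sum.delta)
  qed
  also have "(\<Sum>k<n. a i k) * v $ i - (\<Sum>j<n. a i j * v $ j) = lap n a (\<lambda>j. v $ j) i"
    by (simp add: lap_def right_diff_distrib sum_subtractf sum_distrib_right)
  finally show ?thesis .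
qed

context
  fixes n :: nat and a :: "nat \<Rightarrow> nat \<Rightarrow> real"
  assumes undir: "undirected_graph n a"
begin

lemma weight_nonneg: "i < n \<Longrightarrow> j < n \<Longrightarrow> 0 \<le> a i j"
  using undir unfolding undirected_graph_def by auto

lemma sum_lap_eq_0: "(\<Sum>i<n. lap n a w i) = 0"
proof -
  have "(\<Sum>i<n. \<Sum>j<n. a i j *\<^sub>R w j) = (\<Sum>j<n. \<Sum>i<n. a j i *\<^sub>R w j)"
    using undir unfolding undirected_graph_def by (subst sum.swap) (intro sum.cong refl; auto)
  then show ?thesis
    by (simp add: lap_def scaleR_diff_right sum_subtractf)
qed

lemma sum_inner_lap:
  fixes u w :: "nat \<Rightarrow> 'v::real_inner"
  shows "(\<Sum>i<n. u i \<bullet> lap n a w i) = (\<Sum>i<n. \<Sum>j<n. a i j * ((u i - u j) \<bullet> (w i - w j))) / 2"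
proof -
  have "(\<Sum>i<n. \<Sum>j<n. a i j * (u i \<bullet> (w i - w j))) = (\<Sum>j<n. \<Sum>i<n. a j i * (u i \<bullet> (w i - w j)))"
    using undir unfolding undirected_graph_def by (subst sum.swap) (intro sum.cong refl; auto)
  then have swap: "(\<Sum>i<n. \<Sum>j<n. a i j * (u i \<bullet> (w i - w j))) = (\<Sum>i<n. \<Sum>j<n. a i j * (u j \<bullet> (w j - w i)))"
    by simp
  have "(\<Sum>i<n. \<Sum>j<n. a i j * ((u i - u j) \<bullet> (w i - w j)))
      = (\<Sum>i<n. \<Sum>j<n. a i j * (u i \<bullet> (w i - w j))) + (\<Sum>i<n. \<Sum>j<n. a i j * (u j \<bullet> (w j - w i)))"
    by (simp add: sum.distrib[symmetric] inner_diff_left inner_diff_right algebra_simps)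
  then show ?thesis
    using swap by (simp add: lap_def inner_sum_right)
qed

lemma sum_inner_lap_commute:
  fixes u w :: "nat \<Rightarrow> 'v::real_inner"
  shows "(\<Sum>i<n. u i \<bullet> lap n a w i) = (\<Sum>i<n. w i \<bullet> lap n a u i)"
  unfolding sum_inner_lap by (simp add: inner_commute)

lemma lap_form_eq_edge_sum: "lap_form n a w = (\<Sum>i<n. \<Sum>j<n. a i j * (norm (w i - w j))\<^sup>2) / 2"
  unfolding lap_form_def sum_inner_lap by (simp add: power2_norm_eq_inner)

lemma lap_form_nonneg: "0 \<le> lap_form n a w"
  unfolding lap_form_eq_edge_sum by (intro divide_nonneg_pos sum_nonneg mult_nonneg_nonneg weight_nonneg) auto

lemma edge_le_lap_form:
  assumes "j < n" "k < n"
  shows "a j k * (norm (w j - w k))\<^sup>2 \<le> 2 * lap_form n a w"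
proof -
  have nonneg: "\<And>i j. i < n \<Longrightarrow> j < n \<Longrightarrow> 0 \<le> a i j * (norm (w i - w j))\<^sup>2"
    by (simp add: weight_nonneg)
  have "a j k * (norm (w j - w k))\<^sup>2 \<le> (\<Sum>l<n. a j l * (norm (w j - w l))\<^sup>2)"
    using assms nonneg by (intro member_le_sum) auto
  also have "\<dots> \<le> (\<Sum>i<n. \<Sum>l<n. a i l * (norm (w i - w l))\<^sup>2)"
    using assms nonneg by (intro member_le_sum sum_nonneg) auto
  finally show ?thesis
    unfolding lap_form_eq_edge_sum by simp
qed

lemma norm_diff_le_lap_form_if_path:
  assumes "(\<lambda>u v. u < n \<and> v < n \<and> a u v > 0)\<^sup>*\<^sup>* i j"
  shows "\<exists>C\<ge>0. \<forall>w::nat \<Rightarrow> 'v::real_inner. norm (w i - w j) \<le> C * sqrt (lap_form n a w)"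
  using assms
proof (induction rule: rtranclp_induct)
  case base
  show ?case by auto
next
  case (step j k)
  then obtain C where "C \<ge> 0" and C: "\<And>w::nat \<Rightarrow> 'v. norm (w i - w j) \<le> C * sqrt (lap_form n a w)"
    by auto
  have jk: "j < n" "k < n" "a j k > 0"
    using step.hyps by auto
  define D where "D = sqrt (2 / a j k)"
  have edge: "norm (w j - w k) \<le> D * sqrt (lap_form n a w)" for w :: "nat \<Rightarrow> 'v"
  proof -
    have "(norm (w j - w k))\<^sup>2 \<le> (2 / a j k) * lap_form n a w"
      using edge_le_lap_form[OF jk(1,2), of w] jk(3) by (simp add: field_simps)
    then show ?thesis
      unfolding D_def real_sqrt_mult[symmetric] by (rule real_le_rsqrt)
  qed
  have "norm (w i - w k) \<le> (C + D) * sqrt (lap_form n a w)" for w :: "nat \<Rightarrow> 'v"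
    using norm_triangle_ineq[of "w i - w j" "w j - w k"] C[of w] edge[of w]
    by (simp add: algebra_simps)
  moreover have "0 \<le> C + D"
    using \<open>C \<ge> 0\<close> jk(3) by (simp add: D_def)
  ultimately show ?case by blast
qed

lemma sum_eq_0_if_lap_avg_mat_mult_vec:
  assumes "n > 0" "v \<in> carrier_vec n" "\<And>i. i < n \<Longrightarrow> (lap_avg_mat n a *\<^sub>v v) $ i = c i"
    and "(\<Sum>i<n. c i) = 0"
  shows "(\<Sum>j<n. v $ j) = 0"
proof -
  have "(\<Sum>i<n. lap n a (\<lambda>j. v $ j) i + (\<Sum>j<n. v $ j) / real n) = 0"
    using assms(2-4) lap_avg_mat_mult_vec by simp
  then show ?thesis
    using assms(1) sum_lap_eq_0[of "\<lambda>j. v $ j"] by (simp add: sum.distrib)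
qed

lemma norm_lap_le:
  assumes "i < n" "\<And>j. j < n \<Longrightarrow> norm (w i - w j) \<le> D"
  shows "norm (lap n a w i) \<le> (\<Sum>j<n. a i j) * D"
proof -
  have "norm (lap n a w i) \<le> (\<Sum>j<n. norm (a i j *\<^sub>R (w i - w j)))"
    unfolding lap_def by (rule norm_sum)
  also have "\<dots> \<le> (\<Sum>j<n. a i j * D)"
    using assms weight_nonneg by (intro sum_mono) (simp add: mult_left_mono)
  finally show ?thesis
    by (simp add: sum_distrib_right)
qed

context
  assumes conn: "graph_connected n a"
begin

lemma norm_diff_le_lap_form:
  obtains C where "C \<ge> 0"
    and "\<And>(w::nat \<Rightarrow> 'v::real_inner) i j. i < n \<Longrightarrow> j < n \<Longrightarrow> norm (w i - w j) \<le> C * sqrt (lap_form n a w)"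
proof -
  have "\<forall>p\<in>{..<n} \<times> {..<n}. \<exists>C\<ge>0. \<forall>w::nat \<Rightarrow> 'v. norm (w (fst p) - w (snd p)) \<le> C * sqrt (lap_form n a w)"
  proof
    fix p assume "p \<in> {..<n} \<times> {..<n}"
    then obtain i j where p: "p = (i, j)" "i < n" "j < n"
      by auto
    then have "(\<lambda>u v. u < n \<and> v < n \<and> a u v > 0)\<^sup>*\<^sup>* i j"
      using conn unfolding graph_connected_def by auto
    from norm_diff_le_lap_form_if_path[OF this]
    show "\<exists>C\<ge>0. \<forall>w::nat \<Rightarrow> 'v. norm (w (fst p) - w (snd p)) \<le> C * sqrt (lap_form n a w)"
      using p by simp
  qed
  from bchoice[OF this] obtain Cp where "\<forall>p\<in>{..<n} \<times> {..<n}.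
      Cp p \<ge> 0 \<and> (\<forall>w::nat \<Rightarrow> 'v. norm (w (fst p) - w (snd p)) \<le> Cp p * sqrt (lap_form n a w))"
    by blast
  then have Cp: "\<And>p. p \<in> {..<n} \<times> {..<n} \<Longrightarrow>
      Cp p \<ge> 0 \<and> (\<forall>w::nat \<Rightarrow> 'v. norm (w (fst p) - w (snd p)) \<le> Cp p * sqrt (lap_form n a w))"
    by blast
  define C where "C = (\<Sum>p\<in>{..<n} \<times> {..<n}. Cp p)"
  show ?thesis
  proof (rule that)
    show "C \<ge> 0"
      unfolding C_def using Cp by (intro sum_nonneg) auto
    fix w :: "nat \<Rightarrow> 'v" and i j
    assume ij: "i < n" "j < n"
    have "Cp (i, j) \<le> C"
      unfolding C_def using Cp ij by (intro member_le_sum) auto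
    moreover have "sqrt (lap_form n a w) \<ge> 0"
      using lap_form_nonneg by simp
    ultimately have "Cp (i, j) * sqrt (lap_form n a w) \<le> C * sqrt (lap_form n a w)"
      by (rule mult_right_mono)
    moreover have "norm (w i - w j) \<le> Cp (i, j) * sqrt (lap_form n a w)"
      using Cp[of "(i, j)"] ij by auto
    ultimately show "norm (w i - w j) \<le> C * sqrt (lap_form n a w)"
      by linarith
  qed
qed

lemma lap_form_eq_0_imp_consensus:
  assumes "lap_form n a (w::nat \<Rightarrow> 'v::real_inner) = 0" "i < n" "j < n"
  shows "w i = w j"
proof -
  obtain C where "C \<ge> 0"
    and C: "\<And>(w::nat \<Rightarrow> 'v) i j. i < n \<Longrightarrow> j < n \<Longrightarrow> norm (w i - w j) \<le> C * sqrt (lap_form n a w)"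
    by (rule norm_diff_le_lap_form) blast
  have "norm (w i - w j) \<le> C * sqrt (lap_form n a w)"
    using C assms(2,3) .
  then have "norm (w i - w j) \<le> 0"
    using assms(1) by simp
  then show ?thesis
    by simp
qed

lemma lap_eq_0_imp_consensus:
  assumes "\<And>i. i < n \<Longrightarrow> lap n a (w::nat \<Rightarrow> 'v::real_inner) i = 0" "i < n" "j < n"
  shows "w i = w j"
  using assms by (intro lap_form_eq_0_imp_consensus) (auto simp: lap_form_def)

lemma lap_form_le_norm_lap:
  assumes "n > 0"
  obtains C where "C \<ge> 0" "\<And>w::nat \<Rightarrow> 'v::real_inner. lap_form n a w \<le> C * (\<Sum>i<n. norm (lap n a w i))\<^sup>2"
proof -
  obtain C where "C \<ge> 0"
    and C: "\<And>(w::nat \<Rightarrow> 'v) i j. i < n \<Longrightarrow> j < n \<Longrightarrow> norm (w i - w j) \<le> C * sqrt (lap_form n a w)"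
    by (rule norm_diff_le_lap_form) blast
  have "lap_form n a w \<le> C\<^sup>2 * (\<Sum>i<n. norm (lap n a w i))\<^sup>2" for w :: "nat \<Rightarrow> 'v"
  proof -
    define q where "q = sqrt (lap_form n a w)"
    define L where "L = (\<Sum>i<n. norm (lap n a w i))"
    have q: "q \<ge> 0" "q\<^sup>2 = lap_form n a w"
      unfolding q_def using lap_form_nonneg by auto
    have "L \<ge> 0"
      unfolding L_def by (intro sum_nonneg) auto
    \<comment> \<open>subtracting the constant w 0 does not change the form, since the Laplacian sums to zero\<close>
    have "lap_form n a w = (\<Sum>i<n. (w i - w 0) \<bullet> lap n a w i)"
      using sum_lap_eq_0[of w]
      by (simp add: lap_form_def inner_diff_left sum_subtractf inner_sum_right[symmetric])
    also have "\<dots> \<le> (\<Sum>i<n. (C * q) * norm (lap n a w i))"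
    proof (rule sum_mono)
      fix i assume "i \<in> {..<n}"
      then have "norm (w i - w 0) \<le> C * q"
        using C assms unfolding q_def by auto
      moreover have "(w i - w 0) \<bullet> lap n a w i \<le> norm (w i - w 0) * norm (lap n a w i)"
        using Cauchy_Schwarz_ineq2 by (rule abs_le_D1)
      ultimately show "(w i - w 0) \<bullet> lap n a w i \<le> (C * q) * norm (lap n a w i)"
        by (meson mult_right_mono norm_ge_zero order_trans)
    qed
    also have "\<dots> = q * (C * L)"
      unfolding L_def by (simp add: sum_distrib_left algebra_simps)
    finally have "q * q \<le> q * (C * L)"
      using q by (simp add: power2_eq_square)
    then have "q \<le> C * L"
      using q(1) \<open>C \<ge> 0\<close> \<open>L \<ge> 0\<close> mult_left_le_imp_le[of q q "C * L"]
      by (cases "q = 0") auto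
    then have "q\<^sup>2 \<le> (C * L)\<^sup>2"
      using q(1) by (rule power_mono)
    then show ?thesis
      unfolding L_def q(2) by (simp add: power_mult_distrib)
  qed
  then show ?thesis
    using that[of "C\<^sup>2"] by simp
qed

text \<open>The matrix L + J/n, with J the all-ones matrix, is injective: a kernel vector has zero sum,
  hence lies in the kernel of L, hence is a consensus vector with zero sum.\<close>
lemma det_lap_avg_mat_neq_0:
  assumes "n > 0"
  shows "det (lap_avg_mat n a) \<noteq> 0"
proof
  assume "det (lap_avg_mat n a) = 0"
  then obtain v where v: "v \<in> carrier_vec n" "v \<noteq> 0\<^sub>v n" "lap_avg_mat n a *\<^sub>v v = 0\<^sub>v n"
    using det_0_iff_vec_prod_zero[OF lap_avg_mat_carrier] by auto
  then have sum_v: "(\<Sum>j<n. v $ j) = 0"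
    by (intro sum_eq_0_if_lap_avg_mat_mult_vec[of v "\<lambda>_. 0"]) (auto simp: assms)
  then have "lap n a (\<lambda>j. v $ j) i = 0" if "i < n" for i
    using lap_avg_mat_mult_vec[where a = a, OF v(1) that] v(3) that by simp
  then have consensus: "v $ i = v $ 0" if "i < n" for i
    using lap_eq_0_imp_consensus[of "\<lambda>j. v $ j"] assms that by blast
  have "(\<Sum>j<n. v $ j) = (\<Sum>j<n. v $ 0)"
    by (intro sum.cong refl consensus) simp
  then have "v $ 0 = 0"
    using sum_v assms by simp
  then have "v $ i = 0" if "i < n" for i
    using consensus[OF that] by simp
  then have "v = 0\<^sub>v n"
    using v(1) by (intro eq_vecI) auto
  then show False
    using v(2) by blast
qed

lemma lap_surj_real:
  fixes c :: "nat \<Rightarrow> real"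
  assumes "n > 0" "(\<Sum>i<n. c i) = 0"
  obtains w where "\<And>i. i < n \<Longrightarrow> lap n a w i = c i"
proof -
  have "lap_avg_mat n a \<in> Units (ring_mat TYPE(real) n undefined)"
    by (rule det_non_zero_imp_unit[OF lap_avg_mat_carrier det_lap_avg_mat_neq_0[OF assms(1)]])
  then obtain B where B: "B \<in> carrier_mat n n" "lap_avg_mat n a * B = 1\<^sub>m n"
    unfolding Units_def ring_mat_def by auto
  define v where "v = B *\<^sub>v vec n c"
  have v: "v \<in> carrier_vec n"
    unfolding v_def using B by simp
  have "lap_avg_mat n a *\<^sub>v v = vec n c"
    unfolding v_def using B by (simp add: assoc_mult_mat_vec[OF lap_avg_mat_carrier B(1), symmetric])
  then have Mv: "(lap_avg_mat n a *\<^sub>v v) $ i = c i" if "i < n" for i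
    using that by simp
  have "(\<Sum>j<n. v $ j) = 0"
    by (rule sum_eq_0_if_lap_avg_mat_mult_vec[OF assms(1) v Mv assms(2)])
  then show ?thesis
    using lap_avg_mat_mult_vec[where a = a, OF v] Mv by (intro that[of "\<lambda>j. v $ j"]) simp
qed

end

end

no_notation Matrix.vec_index (infixl \<open>$\<close> 100)

lemma lap_surj:
  fixes c :: "nat \<Rightarrow> real^'p"
  assumes "undirected_graph n a" "graph_connected n a" "n > 0" "(\<Sum>i<n. c i) = 0"
  obtains w where "\<And>i. i < n \<Longrightarrow> lap n a w i = c i"
proof -
  have "\<forall>r. \<exists>w::nat \<Rightarrow> real. \<forall>i<n. lap n a w i = c i $ r"
  proof
    fix r
    have "(\<Sum>i<n. c i $ r) = 0"
      using arg_cong[OF assms(4), of "\<lambda>v. v $ r"] by (simp add: sum_component)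
    then show "\<exists>w::nat \<Rightarrow> real. \<forall>i<n. lap n a w i = c i $ r"
      using lap_surj_real[OF assms(1-3), of "\<lambda>i. c i $ r"] by blast
  qed
  then obtain W where "\<forall>r. \<forall>i<n. lap n a (W r) i = c i $ r"
    by (rule choice[THEN exE]) blast
  then have W: "\<And>r i. i < n \<Longrightarrow> lap n a (W r) i = c i $ r"
    by blast
  have "lap n a (\<lambda>i. \<chi> r. W r i) i = c i" if "i < n" for i
    using W[OF that] by (simp add: Finite_Cartesian_Product.vec_eq_iff lap_def sum_component)
  then show ?thesis
    using that by blast
qed

section \<open>The IDEA flow\<close>

lemma inner_transpose_matrix_vector:
  fixes M :: "real^'n^'m"
  shows "u \<bullet> (transpose M *v w) = (M *v u) \<bullet> w"
proof -
  have "u \<bullet> (transpose M *v w) = (w v* M) \<bullet> u"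
    by (simp add: inner_commute)
  also have "\<dots> = w \<bullet> (M *v u)"
    by (rule dot_lmul_matrix)
  finally show ?thesis
    by (simp add: inner_commute)
qed

lemma uniformly_continuous_on_matrix_vector_mult:
  fixes M :: "real^'n^'m" and u :: "real \<Rightarrow> real^'n" and S :: "real set"
  shows "uniformly_continuous_on S u \<Longrightarrow> uniformly_continuous_on S (\<lambda>t. M *v u t)"
  by (rule bounded_linear.uniformly_continuous_on[OF matrix_vector_mul_bounded_linear])

locale idea_flow =
  fixes n :: nat
    and f :: "nat \<Rightarrow> real^'d::finite \<Rightarrow> real"
    and g :: "nat \<Rightarrow> real^'d \<Rightarrow> real^'d"
    and A :: "nat \<Rightarrow> real^'d^'p::finite"
    and b :: "real^'p"
    and bb :: "nat \<Rightarrow> real^'p"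
    and a :: "nat \<Rightarrow> nat \<Rightarrow> real"
    and \<alpha> \<beta> :: real
    and x :: "real \<Rightarrow> real^'d"
    and lam z :: "real \<Rightarrow> nat \<Rightarrow> real^'p"
  assumes n_pos: "n > 0"
    and f_convex: "\<forall>i<n. convex_on UNIV (f i)"
    and f_grad: "\<forall>i<n. \<forall>u. (f i has_derivative (\<lambda>h. g i u \<bullet> h)) (at u)"
    and g_lip: "\<forall>i<n. loc_lipschitz_on UNIV (g i)"
    and opt_exists: "\<exists>u. (\<Sum>i<n. A i *v u) = b \<and>
                       (\<forall>v. (\<Sum>i<n. A i *v v) = b \<longrightarrow> (\<Sum>i<n. f i u) \<le> (\<Sum>i<n. f i v))"
    and bb_sum: "(\<Sum>i<n. bb i) = b"
    and undir: "undirected_graph n a"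
    and conn: "graph_connected n a"
    and \<alpha>_pos: "\<alpha> > 0" and \<beta>_pos: "\<beta> > 0"
    and z0: "(\<Sum>i<n. z 0 i) = 0"
    and x_ode: "\<forall>t\<ge>0. (x has_vector_derivative
        (- \<alpha> *\<^sub>R ((\<Sum>i<n. g i (x t)) + (\<Sum>i<n. transpose (A i) *v lam t i))
         - (\<Sum>i<n. transpose (A i) *v (A i *v x t - bb i - z t i)))) (at t within {0..})"
    and lam_ode: "\<forall>i<n. \<forall>t\<ge>0. ((\<lambda>s. lam s i) has_vector_derivative
        (A i *v x t - bb i - z t i - \<beta> *\<^sub>R lap n a (lam t) i)) (at t within {0..})"
    and z_ode: "\<forall>i<n. \<forall>t\<ge>0. ((\<lambda>s. z s i) has_vector_derivative
        ((\<alpha> * \<beta>) *\<^sub>R lap n a (lam t) i)) (at t within {0..})"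
begin

definition F :: "real^'d \<Rightarrow> real" where "F u = (\<Sum>i<n. f i u)"
definition G :: "real^'d \<Rightarrow> real^'d" where "G u = (\<Sum>i<n. g i u)"
definition AT :: "(nat \<Rightarrow> real^'p) \<Rightarrow> real^'d" where "AT v = (\<Sum>i<n. transpose (A i) *v v i)"
definition residual :: "real \<Rightarrow> nat \<Rightarrow> real^'p" where "residual t i = A i *v x t - bb i - z t i"
definition xdot :: "real \<Rightarrow> real^'d" where "xdot t = - \<alpha> *\<^sub>R (G (x t) + AT (lam t)) - AT (residual t)"

definition kkt_point :: "real^'d \<Rightarrow> real^'p \<Rightarrow> bool" where
  "kkt_point xq mq \<longleftrightarrow> (\<Sum>i<n. A i *v xq) = b \<and> G xq + AT (\<lambda>_. mq) = 0"

lemma x_deriv: "t \<ge> 0 \<Longrightarrow> (x has_vector_derivative xdot t) (at t within {0..})"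
  using x_ode unfolding xdot_def G_def AT_def residual_def by simp

lemma lam_deriv: "i < n \<Longrightarrow> t \<ge> 0 \<Longrightarrow>
    ((\<lambda>s. lam s i) has_vector_derivative (residual t i - \<beta> *\<^sub>R lap n a (lam t) i)) (at t within {0..})"
  using lam_ode unfolding residual_def by simp

lemma z_deriv: "i < n \<Longrightarrow> t \<ge> 0 \<Longrightarrow>
    ((\<lambda>s. z s i) has_vector_derivative ((\<alpha> * \<beta>) *\<^sub>R lap n a (lam t) i)) (at t within {0..})"
  using z_ode by simp

lemma residual_deriv:
  assumes "i < n" "t \<ge> 0"
  shows "((\<lambda>s. residual s i) has_vector_derivative (A i *v xdot t - (\<alpha> * \<beta>) *\<^sub>R lap n a (lam t) i))
    (at t within {0..})"
proof -
  have "((\<lambda>s. A i *v x s - bb i - z s i) has_vector_derivative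
      (A i *v xdot t - 0 - (\<alpha> * \<beta>) *\<^sub>R lap n a (lam t) i)) (at t within {0..})"
    by (intro has_vector_derivative_diff has_vector_derivative_matrix_vector_mult x_deriv z_deriv
        has_vector_derivative_const assms)
  then show ?thesis
    unfolding residual_def by simp
qed

lemma sum_z_eq_0:
  assumes "t \<ge> 0"
  shows "(\<Sum>i<n. z t i) = 0"
proof -
  have "((\<lambda>s. \<Sum>i<n. z s i) has_vector_derivative 0) (at t within {0..})" if "t \<ge> 0" for t
  proof -
    have "((\<lambda>s. \<Sum>i<n. z s i) has_vector_derivative (\<Sum>i<n. (\<alpha> * \<beta>) *\<^sub>R lap n a (lam t) i)) (at t within {0..})"
      by (intro has_vector_derivative_sum z_deriv that) simp
    then show ?thesis
      by (simp add: scaleR_sum_right[symmetric] sum_lap_eq_0[OF undir])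
  qed
  from has_vector_derivative_zero_imp_const[OF this assms] show ?thesis
    using z0 by simp
qed

lemma F_has_derivative: "(F has_derivative (\<lambda>h. G u \<bullet> h)) (at u)"
proof -
  have "((\<lambda>v. \<Sum>i<n. f i v) has_derivative (\<lambda>h. \<Sum>i<n. g i u \<bullet> h)) (at u)"
    using f_grad by (intro has_derivative_sum) auto
  then show ?thesis
    unfolding F_def G_def by (simp add: inner_sum_left)
qed

lemma F_ge_tangent: "F u + G u \<bullet> (v - u) \<le> F v"
proof -
  have "f i u + g i u \<bullet> (v - u) \<le> f i v" if "i < n" for i
    using f_convex f_grad that by (intro convex_on_ge_tangent) auto
  then have "(\<Sum>i<n. f i u + g i u \<bullet> (v - u)) \<le> (\<Sum>i<n. f i v)"
    by (intro sum_mono) auto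
  then show ?thesis
    unfolding F_def G_def by (simp add: sum.distrib inner_sum_left)
qed

lemma G_monotone: "0 \<le> (u - v) \<bullet> (G u - G v)"
  using F_ge_tangent[of u v] F_ge_tangent[of v u] by (simp add: inner_diff_left inner_diff_right inner_commute)

lemma G_continuous: "continuous_on UNIV G"
proof -
  have "continuous (at u) (g i)" if i: "i < n" for i u
  proof -
    obtain r L where "r > 0" "L-lipschitz_on (ball u r \<inter> UNIV) (g i)"
      using g_lip i unfolding loc_lipschitz_on_def by blast
    then have "continuous_on (ball u r) (g i)"
      by (auto intro: lipschitz_on_continuous_on)
    then show ?thesis
      using \<open>r > 0\<close> by (simp add: continuous_on_eq_continuous_at)
  qed
  then show ?thesis
    unfolding G_def by (intro continuous_on_sum continuous_at_imp_continuous_on) auto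
qed

lemma AT_cong: "(\<And>i. i < n \<Longrightarrow> u i = w i) \<Longrightarrow> AT u = AT w"
  unfolding AT_def by (intro sum.cong) auto

lemma AT_diff: "AT u - AT w = AT (\<lambda>i. u i - w i)"
  unfolding AT_def by (simp add: sum_subtractf matrix_vector_mult_diff_distrib)

lemma AT_const_add: "AT (\<lambda>_. u + w) = AT (\<lambda>_. u) + AT (\<lambda>_. w)"
  unfolding AT_def by (simp add: sum.distrib matrix_vector_right_distrib)

lemma inner_AT: "u \<bullet> AT v = (\<Sum>i<n. (A i *v u) \<bullet> v i)"
  unfolding AT_def by (simp add: inner_sum_right inner_transpose_matrix_vector del: transpose_matrix_vector)

lemma linear_AT_const: "linear (\<lambda>v::real^'p. AT (\<lambda>_. v))"
  unfolding AT_def by (intro linear_compose_sum ballI matrix_vector_mul_linear)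

lemma tendsto_AT:
  assumes "\<And>i. i < n \<Longrightarrow> ((\<lambda>k. v k i) \<longlongrightarrow> w i) net"
  shows "((\<lambda>k. AT (v k)) \<longlongrightarrow> AT w) net"
  unfolding AT_def by (intro tendsto_sum bounded_linear.tendsto[OF matrix_vector_mul_bounded_linear] assms) simp

lemma bounded_AT_comp:
  fixes v :: "real \<Rightarrow> nat \<Rightarrow> real^'p" and S :: "real set"
  assumes "\<And>i. i < n \<Longrightarrow> bounded ((\<lambda>t. v t i) ` S)"
  shows "bounded ((\<lambda>t. AT (v t)) ` S)"
  unfolding AT_def by (intro bounded_sum_comp bounded_linear_comp[OF matrix_vector_mul_bounded_linear] assms) simp

lemma uniformly_continuous_on_AT:
  fixes v :: "real \<Rightarrow> nat \<Rightarrow> real^'p" and S :: "real set"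
  assumes "\<And>i. i < n \<Longrightarrow> uniformly_continuous_on S (\<lambda>t. v t i)"
  shows "uniformly_continuous_on S (\<lambda>t. AT (v t))"
  unfolding AT_def by (intro uniformly_continuous_on_sum uniformly_continuous_on_matrix_vector_mult assms) simp

text \<open>Lagrange multipliers: the gradient at a minimiser is orthogonal to the kernel of the
  constraint map, hence lies in the range of its adjoint.\<close>
lemma kkt_point_exists: "\<exists>xs mu. kkt_point xs mu"
proof -
  obtain xs where feas: "(\<Sum>i<n. A i *v xs) = b" and opt: "\<And>v. (\<Sum>i<n. A i *v v) = b \<Longrightarrow> F xs \<le> F v"
    using opt_exists unfolding F_def by blast
  define S where "S = range (\<lambda>v. AT (\<lambda>_. v))"
  have "subspace S"
    unfolding S_def by (rule linear_subspace_image[OF linear_AT_const subspace_UNIV])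
  then have span_S: "span S = S"
    by simp
  obtain y r where "y \<in> span S" and r: "\<And>w. w \<in> span S \<Longrightarrow> r \<bullet> w = 0" and dec: "G xs = y + r"
    using orthogonal_subspace_decomp_exists[of S "G xs"] unfolding Linear_Algebra.orthogonal_def by blast
  define q where "q = (\<Sum>i<n. A i *v r)"
  have "q \<bullet> q = r \<bullet> AT (\<lambda>_. q)"
    unfolding inner_AT q_def by (simp add: inner_sum_left)
  also have "\<dots> = 0"
    using r span_S unfolding S_def by auto
  finally have "q = 0"
    by simp
  have "G xs \<bullet> r = 0"
  proof (rule gradient_orthogonal_if_min_along_line[OF F_has_derivative])
    fix s :: real
    have "(\<Sum>i<n. A i *v (xs + s *\<^sub>R r)) = (\<Sum>i<n. A i *v xs) + s *\<^sub>R q"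
      unfolding q_def by (simp add: matrix_vector_right_distrib matrix_vector_mult_scaleR sum.distrib scaleR_sum_right)
    then show "F xs \<le> F (xs + s *\<^sub>R r)"
      using feas \<open>q = 0\<close> by (intro opt) simp
  qed
  moreover have "y \<bullet> r = 0"
    using r[OF \<open>y \<in> span S\<close>] by (simp add: inner_commute)
  ultimately have "r = 0"
    using dec by (simp add: inner_add_left)
  then obtain v where "G xs = AT (\<lambda>_. v)"
    using dec \<open>y \<in> span S\<close> span_S unfolding S_def by auto
  then have "G xs + AT (\<lambda>_. - v) = 0"
    using linear_neg[OF linear_AT_const, of v] by simp
  then show ?thesis
    using feas unfolding kkt_point_def by blast
qed

lemma kkt_point_optimal:
  assumes "kkt_point xq mq" "(\<Sum>i<n. A i *v v) = b"
  shows "F xq \<le> F v"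
proof -
  have "G xq \<bullet> (v - xq) = - (AT (\<lambda>_. mq) \<bullet> (v - xq))"
    using assms(1) unfolding kkt_point_def by (simp add: eq_neg_iff_add_eq_0[symmetric])
  also have "AT (\<lambda>_. mq) \<bullet> (v - xq) = (\<Sum>i<n. A i *v v - A i *v xq) \<bullet> mq"
    by (simp add: inner_commute inner_AT inner_sum_right matrix_vector_mult_diff_distrib)
  also have "\<dots> = 0"
    using assms unfolding kkt_point_def by (simp add: sum_subtractf)
  finally show ?thesis
    using F_ge_tangent[of xq v] by simp
qed

text \<open>By convexity F then coincides at u with its tangent at v, so F minus this tangent attains its
  minimum 0 at u, where its gradient G u - G v must vanish.\<close>
lemma G_eq_if_monotone_gap_eq_0:
  assumes "(u - v) \<bullet> (G u - G v) = 0"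
  shows "G u = G v"
proof -
  define \<phi> where "\<phi> w = F w - F v - G v \<bullet> (w - v)" for w
  have "0 \<le> \<phi> w" for w
    using F_ge_tangent[of v w] unfolding \<phi>_def by simp
  moreover have "\<phi> u = 0"
    using F_ge_tangent[of v u] F_ge_tangent[of u v] assms unfolding \<phi>_def
    by (simp add: inner_diff_left inner_diff_right inner_commute)
  moreover have "(\<phi> has_derivative (\<lambda>h. (G u - G v) \<bullet> h)) (at u)"
  proof -
    have "((\<lambda>w. F w - F v - G v \<bullet> (w - v)) has_derivative (\<lambda>h. G u \<bullet> h - 0 - G v \<bullet> (h - 0))) (at u)"
      by (intro has_derivative_diff F_has_derivative has_derivative_const has_derivative_inner_right
          has_derivative_ident)
    then show ?thesis
      unfolding \<phi>_def by (simp add: inner_diff_left)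
  qed
  ultimately have "(G u - G v) \<bullet> (G u - G v) = 0"
    by (intro gradient_orthogonal_if_min_along_line[of \<phi>]) auto
  then show ?thesis
    by simp
qed

definition z_eq :: "real^'d \<Rightarrow> nat \<Rightarrow> real^'p" where "z_eq xq i = A i *v xq - bb i"

lemma sum_z_eq: "(\<Sum>i<n. A i *v xq) = b \<Longrightarrow> (\<Sum>i<n. z_eq xq i) = 0"
  unfolding z_eq_def using bb_sum by (simp add: sum_subtractf)

text \<open>The potential turns the z-part of the Lyapunov function into a Laplacian form. It exists
  because z - z_eq has zero sum: z starts with zero sum and \<open>\<Sum>\<^sub>i z\<^sub>i\<close> is conserved.\<close>
definition potential :: "real^'d \<Rightarrow> (real \<Rightarrow> nat \<Rightarrow> real^'p) \<Rightarrow> bool" where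
  "potential xq W \<longleftrightarrow> (\<forall>t\<ge>0. \<forall>i<n. lap n a (W t) i = z t i - z_eq xq i \<and>
     ((\<lambda>s. W s i) has_vector_derivative (\<alpha> * \<beta>) *\<^sub>R lam t i) (at t within {0..}))"

lemma potential_exists:
  assumes "(\<Sum>i<n. A i *v xq) = b"
  shows "\<exists>W. potential xq W"
proof -
  have "(\<Sum>i<n. z 0 i - z_eq xq i) = 0"
    using z0 sum_z_eq[OF assms] by (simp add: sum_subtractf)
  then obtain w0 where w0: "\<And>i. i < n \<Longrightarrow> lap n a w0 i = z 0 i - z_eq xq i"
    using lap_surj[OF undir conn n_pos] by blast
  have "\<forall>i\<in>{..<n}. \<exists>P. P 0 = 0 \<and> (\<forall>t\<ge>0. (P has_vector_derivative lam t i) (at t within {0..}))"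
  proof
    fix i assume "i \<in> {..<n}"
    then obtain P where "P 0 = 0" "\<And>t. t \<ge> 0 \<Longrightarrow> (P has_vector_derivative lam t i) (at t within {0..})"
      using primitive_exists[OF lam_deriv] by blast
    then show "\<exists>P. P 0 = 0 \<and> (\<forall>t\<ge>0. (P has_vector_derivative lam t i) (at t within {0..}))"
      by blast
  qed
  from bchoice[OF this] obtain P where P: "\<forall>i\<in>{..<n}. P i 0 = 0 \<and>
      (\<forall>t\<ge>0. (P i has_vector_derivative lam t i) (at t within {0..}))"
    by blast
  define W where "W t i = w0 i + (\<alpha> * \<beta>) *\<^sub>R P i t" for t i
  have W_deriv: "((\<lambda>s. W s i) has_vector_derivative (\<alpha> * \<beta>) *\<^sub>R lam t i) (at t within {0..})"
    if "t \<ge> 0" "i < n" for t i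
    unfolding W_def using P that
    by (auto intro!: has_vector_derivative_add[where f'=0, simplified] has_vector_derivative_scaleR_right)
  have "lap n a (W t) i = z t i - z_eq xq i" if "t \<ge> 0" "i < n" for t i
  proof -
    have "((\<lambda>s. lap n a (W s) i - z s i) has_vector_derivative 0) (at s within {0..})" if "s \<ge> 0" for s
    proof -
      have "((\<lambda>s. lap n a (W s) i - z s i) has_vector_derivative
          lap n a (\<lambda>j. (\<alpha> * \<beta>) *\<^sub>R lam s j) i - (\<alpha> * \<beta>) *\<^sub>R lap n a (lam s) i) (at s within {0..})"
        by (intro has_vector_derivative_diff has_vector_derivative_lap W_deriv z_deriv \<open>i < n\<close> that)
      then show ?thesis
        by (simp add: lap_scaleR)
    qed
    from has_vector_derivative_zero_imp_const[OF this \<open>t \<ge> 0\<close>]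
    have "lap n a (W t) i - z t i = lap n a (W 0) i - z 0 i" .
    also have "lap n a (W 0) i = lap n a w0 i"
      using P \<open>i < n\<close> by (intro lap_cong) (auto simp: W_def)
    finally show ?thesis
      using w0 \<open>i < n\<close> by (simp add: algebra_simps)
  qed
  with W_deriv show ?thesis
    unfolding potential_def by blast
qed

definition lyap :: "real^'d \<Rightarrow> real^'p \<Rightarrow> (real \<Rightarrow> nat \<Rightarrow> real^'p) \<Rightarrow> real \<Rightarrow> real" where
  "lyap xq mq W t = (norm (x t - xq))\<^sup>2 / 2
     + (\<Sum>i<n. (norm (\<alpha> *\<^sub>R (lam t i - mq) + (z t i - z_eq xq i)))\<^sup>2) / (2 * \<alpha>)
     + lap_form n a (W t) / (2 * \<beta>)"

definition dissipation :: "real^'d \<Rightarrow> real \<Rightarrow> real" where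
  "dissipation xq t = \<alpha> * ((x t - xq) \<bullet> (G (x t) - G xq)) + (\<Sum>i<n. (norm (residual t i))\<^sup>2)"

lemma lyap_nonneg: "0 \<le> lyap xq mq W t"
  unfolding lyap_def using lap_form_nonneg[OF undir, of "W t"] \<alpha>_pos \<beta>_pos
  by (intro add_nonneg_nonneg divide_nonneg_pos sum_nonneg) auto

lemma dissipation_nonneg: "0 \<le> dissipation xq t"
  unfolding dissipation_def using G_monotone \<alpha>_pos by (intro add_nonneg_nonneg sum_nonneg) auto

lemma lyap_has_derivative_raw:
  assumes "potential xq W" and t: "t \<ge> 0"
  shows "(lyap xq mq W has_real_derivative
      (x t - xq) \<bullet> xdot t + (\<Sum>i<n. (\<alpha> *\<^sub>R (lam t i - mq) + (z t i - z_eq xq i)) \<bullet> residual t i)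
      + \<alpha> * (\<Sum>i<n. lam t i \<bullet> (z t i - z_eq xq i))) (at t within {0..})"
proof -
  let ?U = "\<lambda>s i. \<alpha> *\<^sub>R (lam s i - mq) + (z s i - z_eq xq i)"
  have W_lap: "\<And>i. i < n \<Longrightarrow> lap n a (W t) i = z t i - z_eq xq i"
    and W_deriv: "\<And>t i. t \<ge> 0 \<Longrightarrow> i < n \<Longrightarrow>
      ((\<lambda>s. W s i) has_vector_derivative (\<alpha> * \<beta>) *\<^sub>R lam t i) (at t within {0..})"
    using assms unfolding potential_def by auto
  have x_part: "((\<lambda>s. (norm (x s - xq))\<^sup>2) has_real_derivative 2 * ((x t - xq) \<bullet> xdot t)) (at t within {0..})"
    using has_real_derivative_norm_power2[OF has_vector_derivative_diff[OF x_deriv[OF t] has_vector_derivative_const]]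
    by simp
  have U_deriv: "((\<lambda>s. ?U s i) has_vector_derivative \<alpha> *\<^sub>R residual t i) (at t within {0..})" if "i < n" for i
  proof -
    have "((\<lambda>s. ?U s i) has_vector_derivative
        \<alpha> *\<^sub>R ((residual t i - \<beta> *\<^sub>R lap n a (lam t) i) - 0) + ((\<alpha> * \<beta>) *\<^sub>R lap n a (lam t) i - 0))
        (at t within {0..})"
      by (intro has_vector_derivative_add has_vector_derivative_scaleR_right has_vector_derivative_diff
          lam_deriv z_deriv that t has_vector_derivative_const)
    then show ?thesis
      by (simp add: algebra_simps)
  qed
  have U_part: "((\<lambda>s. \<Sum>i<n. (norm (?U s i))\<^sup>2) has_real_derivative
      (\<Sum>i<n. 2 * (?U t i \<bullet> (\<alpha> *\<^sub>R residual t i)))) (at t within {0..})"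
    by (intro DERIV_sum has_real_derivative_norm_power2 U_deriv) simp
  have W_part: "((\<lambda>s. lap_form n a (W s)) has_real_derivative
      (\<Sum>i<n. ((\<alpha> * \<beta>) *\<^sub>R lam t i) \<bullet> lap n a (W t) i + W t i \<bullet> lap n a (\<lambda>j. (\<alpha> * \<beta>) *\<^sub>R lam t j) i))
      (at t within {0..})"
    unfolding lap_form_def
    by (intro DERIV_sum has_real_derivative_inner has_vector_derivative_lap W_deriv t) auto
  have "(\<Sum>i<n. W t i \<bullet> lap n a (\<lambda>j. (\<alpha> * \<beta>) *\<^sub>R lam t j) i) = (\<Sum>i<n. ((\<alpha> * \<beta>) *\<^sub>R lam t i) \<bullet> lap n a (W t) i)"
    by (rule sum_inner_lap_commute[OF undir])
  moreover have "(\<Sum>i<n. ((\<alpha> * \<beta>) *\<^sub>R lam t i) \<bullet> lap n a (W t) i) = \<alpha> * \<beta> * (\<Sum>i<n. lam t i \<bullet> (z t i - z_eq xq i))"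
    using W_lap by (simp add: sum_distrib_left)
  ultimately have "(\<Sum>i<n. ((\<alpha> * \<beta>) *\<^sub>R lam t i) \<bullet> lap n a (W t) i + W t i \<bullet> lap n a (\<lambda>j. (\<alpha> * \<beta>) *\<^sub>R lam t j) i)
      / (2 * \<beta>) = \<alpha> * (\<Sum>i<n. lam t i \<bullet> (z t i - z_eq xq i))"
    using \<beta>_pos by (simp add: sum.distrib)
  moreover have "(\<Sum>i<n. 2 * (?U t i \<bullet> (\<alpha> *\<^sub>R residual t i))) / (2 * \<alpha>) = (\<Sum>i<n. ?U t i \<bullet> residual t i)"
    using \<alpha>_pos by (simp add: sum_distrib_left sum_divide_distrib)
  moreover have "(lyap xq mq W has_real_derivative 2 * ((x t - xq) \<bullet> xdot t) / 2
      + (\<Sum>i<n. 2 * (?U t i \<bullet> (\<alpha> *\<^sub>R residual t i))) / (2 * \<alpha>)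
      + (\<Sum>i<n. ((\<alpha> * \<beta>) *\<^sub>R lam t i) \<bullet> lap n a (W t) i + W t i \<bullet> lap n a (\<lambda>j. (\<alpha> * \<beta>) *\<^sub>R lam t j) i)
        / (2 * \<beta>)) (at t within {0..})"
    unfolding lyap_def[abs_def] by (intro DERIV_add DERIV_cdivide x_part U_part W_part)
  ultimately show ?thesis
    by simp
qed

text \<open>The cross terms cancel: this is where the KKT conditions, feasibility and the conservation
  of \<open>\<Sum>\<^sub>i z\<^sub>i\<close> enter.\<close>
lemma lyap_derivative_eq:
  assumes "kkt_point xq mq" and t: "t \<ge> 0"
  shows "(x t - xq) \<bullet> xdot t + (\<Sum>i<n. (\<alpha> *\<^sub>R (lam t i - mq) + (z t i - z_eq xq i)) \<bullet> residual t i)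
      + \<alpha> * (\<Sum>i<n. lam t i \<bullet> (z t i - z_eq xq i)) = - dissipation xq t"
proof -
  define l where "l i = lam t i - mq" for i
  define e where "e = residual t"
  define zt where "zt i = z t i - z_eq xq i" for i
  define S1 where "S1 = (\<Sum>i<n. e i \<bullet> l i)"
  define S2 where "S2 = (\<Sum>i<n. zt i \<bullet> l i)"
  define S3 where "S3 = (\<Sum>i<n. e i \<bullet> e i)"
  define S4 where "S4 = (\<Sum>i<n. zt i \<bullet> e i)"
  define M where "M = (x t - xq) \<bullet> (G (x t) - G xq)"
  have kkt: "G xq + AT (\<lambda>_. mq) = 0" and feas: "(\<Sum>i<n. A i *v xq) = b"
    using assms(1) unfolding kkt_point_def by auto
  have inner_AT_x: "(x t - xq) \<bullet> AT v = (\<Sum>i<n. (e i + zt i) \<bullet> v i)" for v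
  proof -
    have "A i *v (x t - xq) = e i + zt i" for i
      unfolding e_def zt_def residual_def z_eq_def by (simp add: matrix_vector_mult_diff_distrib algebra_simps)
    then show ?thesis
      by (simp add: inner_AT)
  qed
  have AT_lam: "AT (lam t) = AT l - G xq"
    using kkt AT_diff[of "lam t" "\<lambda>_. mq"] unfolding l_def by (simp add: algebra_simps eq_neg_iff_add_eq_0)
  have "xdot t = - \<alpha> *\<^sub>R ((G (x t) - G xq) + AT l) - AT e"
    unfolding xdot_def e_def AT_lam by (simp add: algebra_simps)
  then have "(x t - xq) \<bullet> xdot t = - \<alpha> * (M + (x t - xq) \<bullet> AT l) - (x t - xq) \<bullet> AT e"
    unfolding M_def by (simp add: inner_diff_right inner_add_right)
  also have "\<dots> = - \<alpha> * (M + S1 + S2) - (S3 + S4)"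
    unfolding inner_AT_x S1_def S2_def S3_def S4_def by (simp add: inner_add_left sum.distrib)
  finally have "(x t - xq) \<bullet> xdot t = - \<alpha> * (M + S1 + S2) - (S3 + S4)" .
  moreover have "(\<Sum>i<n. (\<alpha> *\<^sub>R (lam t i - mq) + (z t i - z_eq xq i)) \<bullet> residual t i) = \<alpha> * S1 + S4"
  proof -
    have "(\<alpha> *\<^sub>R l i + zt i) \<bullet> e i = \<alpha> * (e i \<bullet> l i) + zt i \<bullet> e i" for i
      by (simp add: inner_add_left inner_add_right inner_commute)
    then show ?thesis
      unfolding S1_def S4_def l_def[symmetric] zt_def[symmetric] e_def[symmetric]
      by (simp add: sum.distrib sum_distrib_left)
  qed
  moreover have "(\<Sum>i<n. lam t i \<bullet> (z t i - z_eq xq i)) = S2"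
  proof -
    have "(\<Sum>i<n. zt i) = 0"
      unfolding zt_def using sum_z_eq_0[OF t] sum_z_eq[OF feas] by (simp add: sum_subtractf)
    then have "(\<Sum>i<n. mq \<bullet> zt i) = 0"
      by (simp add: inner_sum_right[symmetric])
    then show ?thesis
      unfolding S2_def l_def zt_def by (simp add: inner_diff_left sum_subtractf inner_commute)
  qed
  moreover have "(\<Sum>i<n. (norm (residual t i))\<^sup>2) = S3"
    unfolding S3_def e_def by (simp add: power2_norm_eq_inner)
  ultimately show ?thesis
    unfolding dissipation_def M_def[symmetric] by (simp add: algebra_simps)
qed

lemma lyap_has_derivative:
  assumes "kkt_point xq mq" "potential xq W" "t \<ge> 0"
  shows "(lyap xq mq W has_real_derivative - dissipation xq t) (at t within {0..})"
  using DERIV_cong[OF lyap_has_derivative_raw[OF assms(2,3)] lyap_derivative_eq[OF assms(1,3)]] .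

lemma lyap_decreasing:
  assumes "kkt_point xq mq" "potential xq W" "0 \<le> s" "s \<le> t"
  shows "lyap xq mq W t \<le> lyap xq mq W s"
proof (rule DERIV_within_nonpos_imp_decreasing[OF assms(3,4)])
  fix r assume "r \<in> {s..t}"
  then show "(lyap xq mq W has_real_derivative - dissipation xq r) (at r within {0..})"
    using assms(3) by (intro lyap_has_derivative[OF assms(1,2)]) auto
  show "- dissipation xq r \<le> 0"
    using dissipation_nonneg by simp
qed

lemma lyap_bounds:
  shows "(norm (x t - xq))\<^sup>2 \<le> 2 * lyap xq mq W t"
    and "i < n \<Longrightarrow> (norm (\<alpha> *\<^sub>R (lam t i - mq) + (z t i - z_eq xq i)))\<^sup>2 \<le> 2 * \<alpha> * lyap xq mq W t"
    and "lap_form n a (W t) \<le> 2 * \<beta> * lyap xq mq W t"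
proof -
  define P1 where "P1 = (norm (x t - xq))\<^sup>2"
  define P2 where "P2 = (\<Sum>i<n. (norm (\<alpha> *\<^sub>R (lam t i - mq) + (z t i - z_eq xq i)))\<^sup>2)"
  define P3 where "P3 = lap_form n a (W t)"
  have V: "lyap xq mq W t = P1 / 2 + P2 / (2 * \<alpha>) + P3 / (2 * \<beta>)"
    unfolding lyap_def P1_def P2_def P3_def ..
  have "0 \<le> P1" "0 \<le> P2 / (2 * \<alpha>)" "0 \<le> P3 / (2 * \<beta>)"
    unfolding P1_def P2_def P3_def using \<alpha>_pos \<beta>_pos lap_form_nonneg[OF undir]
    by (auto intro!: divide_nonneg_pos sum_nonneg)
  then show "(norm (x t - xq))\<^sup>2 \<le> 2 * lyap xq mq W t"
    and "lap_form n a (W t) \<le> 2 * \<beta> * lyap xq mq W t"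
    unfolding V P1_def[symmetric] P3_def[symmetric] using \<alpha>_pos \<beta>_pos by (simp_all add: field_simps)
  have "P2 / (2 * \<alpha>) \<le> lyap xq mq W t"
    unfolding V using \<open>0 \<le> P1\<close> \<open>0 \<le> P3 / (2 * \<beta>)\<close> by simp
  then have "P2 \<le> 2 * \<alpha> * lyap xq mq W t"
    using \<alpha>_pos by (simp add: field_simps)
  moreover assume "i < n"
  then have "(norm (\<alpha> *\<^sub>R (lam t i - mq) + (z t i - z_eq xq i)))\<^sup>2 \<le> P2"
    unfolding P2_def by (intro member_le_sum) auto
  ultimately show "(norm (\<alpha> *\<^sub>R (lam t i - mq) + (z t i - z_eq xq i)))\<^sup>2 \<le> 2 * \<alpha> * lyap xq mq W t"
    by linarith
qed

lemma norm_z_sub_z_eq_le_lyap: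
  obtains C where "C \<ge> 0" "\<And>xq mq W t i. potential xq W \<Longrightarrow> t \<ge> 0 \<Longrightarrow> i < n \<Longrightarrow>
    norm (z t i - z_eq xq i) \<le> C * sqrt (lyap xq mq W t)"
proof -
  obtain C0 where "C0 \<ge> 0" and C0: "\<And>(w::nat \<Rightarrow> real^'p) i j. i < n \<Longrightarrow> j < n \<Longrightarrow>
      norm (w i - w j) \<le> C0 * sqrt (lap_form n a w)"
    by (rule norm_diff_le_lap_form[OF undir conn]) blast
  define C where "C = (\<Sum>i<n. \<Sum>j<n. a i j) * C0 * sqrt (2 * \<beta>)"
  show ?thesis
  proof (rule that[of C])
    show "C \<ge> 0"
      unfolding C_def using weight_nonneg[OF undir] \<open>C0 \<ge> 0\<close> \<beta>_pos
      by (intro mult_nonneg_nonneg sum_nonneg) auto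
    fix xq mq W i and t :: real
    assume W: "potential xq W" and "t \<ge> 0" "i < n"
    have "C0 * sqrt (lap_form n a (W t)) \<le> C0 * sqrt (2 * \<beta> * lyap xq mq W t)"
      using lyap_bounds(3) \<open>C0 \<ge> 0\<close> by (intro mult_left_mono) auto
    then have "norm (lap n a (W t) i) \<le> (\<Sum>j<n. a i j) * (C0 * sqrt (2 * \<beta> * lyap xq mq W t))"
      using C0[OF \<open>i < n\<close>] by (intro norm_lap_le[OF undir \<open>i < n\<close>]) (rule order_trans)
    also have "\<dots> \<le> (\<Sum>i<n. \<Sum>j<n. a i j) * (C0 * sqrt (2 * \<beta> * lyap xq mq W t))"
    proof (rule mult_right_mono)
      show "(\<Sum>j<n. a i j) \<le> (\<Sum>i<n. \<Sum>j<n. a i j)"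
        using \<open>i < n\<close> weight_nonneg[OF undir] by (intro member_le_sum sum_nonneg) auto
    qed (use \<open>C0 \<ge> 0\<close> \<beta>_pos lyap_nonneg in simp)
    also have "\<dots> = C * sqrt (lyap xq mq W t)"
      unfolding C_def by (simp add: real_sqrt_mult)
    finally show "norm (z t i - z_eq xq i) \<le> C * sqrt (lyap xq mq W t)"
      using W \<open>t \<ge> 0\<close> \<open>i < n\<close> unfolding potential_def by simp
  qed
qed

lemma trajectory_bounded:
  assumes "kkt_point xs mu"
  shows "bounded (x ` {0..})" "\<And>i. i < n \<Longrightarrow> bounded ((\<lambda>t. lam t i) ` {0..})"
    "\<And>i. i < n \<Longrightarrow> bounded ((\<lambda>t. z t i) ` {0..})"
proof -
  obtain W where W: "potential xs W"
    using potential_exists assms unfolding kkt_point_def by blast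
  define K where "K = lyap xs mu W 0"
  have K: "lyap xs mu W t \<le> K" if "t \<ge> 0" for t
    unfolding K_def using lyap_decreasing[OF assms W _ that] by simp
  obtain C where "C \<ge> 0" and C: "\<And>xq mq W t i. potential xq W \<Longrightarrow> t \<ge> 0 \<Longrightarrow> i < n \<Longrightarrow>
      norm (z t i - z_eq xq i) \<le> C * sqrt (lyap xq mq W t)"
    by (rule norm_z_sub_z_eq_le_lyap) blast
  have "x t \<in> cball xs (sqrt (2 * K))" if "t \<ge> 0" for t
    using lyap_bounds(1)[of t xs mu W] K[OF that]
    by (auto simp: dist_norm norm_minus_commute intro!: real_le_rsqrt)
  then have "x ` {0..} \<subseteq> cball xs (sqrt (2 * K))"
    by auto
  then show "bounded (x ` {0..})"
    by (rule bounded_subset[OF bounded_cball])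
  define D where "D = C * sqrt K"
  have z_near: "norm (z t i - z_eq xs i) \<le> D" if "t \<ge> 0" "i < n" for t i
  proof -
    have "C * sqrt (lyap xs mu W t) \<le> D"
      unfolding D_def using K[OF that(1)] \<open>C \<ge> 0\<close> by (intro mult_left_mono) auto
    then show ?thesis
      using C[where mq = mu, OF W that] by linarith
  qed
  show "bounded ((\<lambda>t. z t i) ` {0..})" if "i < n" for i
  proof (rule bounded_subset[OF bounded_cball[of "z_eq xs i" D]])
    show "(\<lambda>t. z t i) ` {0..} \<subseteq> cball (z_eq xs i) D"
      using z_near[OF _ that] by (auto simp: dist_norm norm_minus_commute)
  qed
  show "bounded ((\<lambda>t. lam t i) ` {0..})" if "i < n" for i
  proof -
    have "lam t i \<in> cball mu ((sqrt (2 * \<alpha> * K) + D) / \<alpha>)" if "t \<ge> 0" for t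
    proof -
      define U where "U = \<alpha> *\<^sub>R (lam t i - mu) + (z t i - z_eq xs i)"
      have "(norm U)\<^sup>2 \<le> 2 * \<alpha> * K"
        unfolding U_def
        by (rule order_trans[OF lyap_bounds(2)[OF \<open>i < n\<close>] mult_left_mono[OF K[OF that]]])
          (use \<alpha>_pos in simp)
      then have "norm U \<le> sqrt (2 * \<alpha> * K)"
        by (rule real_le_rsqrt)
      moreover have "\<alpha> * norm (lam t i - mu) \<le> norm U + norm (z t i - z_eq xs i)"
        using \<alpha>_pos norm_triangle_ineq4[of U "z t i - z_eq xs i"] unfolding U_def by simp
      ultimately have "\<alpha> * norm (lam t i - mu) \<le> sqrt (2 * \<alpha> * K) + D"
        using z_near[OF that \<open>i < n\<close>] by linarith
      then show ?thesis
        using \<alpha>_pos by (simp add: dist_norm norm_minus_commute field_simps)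
    qed
    then have "(\<lambda>t. lam t i) ` {0..} \<subseteq> cball mu ((sqrt (2 * \<alpha> * K) + D) / \<alpha>)"
      by auto
    then show ?thesis
      by (rule bounded_subset[OF bounded_cball])
  qed
qed

lemma bounded_lap_comp:
  fixes v :: "real \<Rightarrow> nat \<Rightarrow> real^'p" and S :: "real set"
  assumes "\<And>j. j < n \<Longrightarrow> bounded ((\<lambda>t. v t j) ` S)" "i < n"
  shows "bounded ((\<lambda>t. lap n a (v t) i) ` S)"
  unfolding lap_def by (intro bounded_sum_comp bounded_scaleR_comp bounded_minus_comp assms) simp

lemma uniformly_continuous_on_lap:
  fixes v :: "real \<Rightarrow> nat \<Rightarrow> real^'p" and S :: "real set"
  assumes "\<And>j. j < n \<Longrightarrow> uniformly_continuous_on S (\<lambda>t. v t j)" "i < n"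
  shows "uniformly_continuous_on S (\<lambda>t. lap n a (v t) i)"
  unfolding lap_def by (intro uniformly_continuous_on_sum uniformly_continuous_on_cmul uniformly_continuous_on_diff assms) simp

lemma trajectory_derivatives_bounded:
  assumes "kkt_point xs mu"
  shows "bounded ((\<lambda>t. G (x t)) ` {0..})" "\<And>i. i < n \<Longrightarrow> bounded ((\<lambda>t. residual t i) ` {0..})"
    "\<And>i. i < n \<Longrightarrow> bounded ((\<lambda>t. lap n a (lam t) i) ` {0..})" "bounded (xdot ` {0..})"
proof -
  note bounded = trajectory_bounded[OF assms]
  show G: "bounded ((\<lambda>t. G (x t)) ` {0..})"
    by (rule bounded_continuous_comp[OF bounded(1) G_continuous])
  show e: "bounded ((\<lambda>t. residual t i) ` {0..})" if "i < n" for i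
    unfolding residual_def
    by (intro bounded_minus_comp bounded_linear_comp[OF matrix_vector_mul_bounded_linear] bounded that
        bounded_const_comp)
  show "bounded ((\<lambda>t. lap n a (lam t) i) ` {0..})" if "i < n" for i
    by (intro bounded_lap_comp bounded that)
  have "bounded ((\<lambda>t. - \<alpha> *\<^sub>R (G (x t) + AT (lam t)) - AT (residual t)) ` {0..})"
    by (intro bounded_minus_comp bounded_scaleR_comp bounded_plus_comp G bounded_AT_comp bounded e)
  then show "bounded (xdot ` {0..})"
    unfolding xdot_def[abs_def] .
qed

lemma trajectory_uniformly_continuous:
  assumes "kkt_point xs mu"
  shows "uniformly_continuous_on {0..} x" "\<And>i. i < n \<Longrightarrow> uniformly_continuous_on {0..} (\<lambda>t. lam t i)"
    "\<And>i. i < n \<Longrightarrow> uniformly_continuous_on {0..} (\<lambda>t. z t i)"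
proof -
  note bounded = trajectory_derivatives_bounded[OF assms]
  obtain B where "\<And>t. t \<in> {0..} \<Longrightarrow> norm (xdot t) \<le> B"
    using bounded(4) by (auto simp: bounded_iff)
  then show "uniformly_continuous_on {0..} x"
    using x_deriv by (intro uniformly_continuous_on_if_vector_derivative_bounded) auto
  show "uniformly_continuous_on {0..} (\<lambda>t. lam t i)" if "i < n" for i
  proof -
    have "bounded ((\<lambda>t. residual t i - \<beta> *\<^sub>R lap n a (lam t) i) ` {0..})"
      by (intro bounded_minus_comp bounded_scaleR_comp bounded that)
    then obtain B where "\<And>t. t \<in> {0..} \<Longrightarrow> norm (residual t i - \<beta> *\<^sub>R lap n a (lam t) i) \<le> B"
      by (auto simp: bounded_iff)
    then show ?thesis
      using lam_deriv[OF that] by (intro uniformly_continuous_on_if_vector_derivative_bounded) auto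
  qed
  show "uniformly_continuous_on {0..} (\<lambda>t. z t i)" if "i < n" for i
  proof -
    have "bounded ((\<lambda>t. (\<alpha> * \<beta>) *\<^sub>R lap n a (lam t) i) ` {0..})"
      by (intro bounded_scaleR_comp bounded that)
    then obtain B where "\<And>t. t \<in> {0..} \<Longrightarrow> norm ((\<alpha> * \<beta>) *\<^sub>R lap n a (lam t) i) \<le> B"
      by (auto simp: bounded_iff)
    then show ?thesis
      using z_deriv[OF that] by (intro uniformly_continuous_on_if_vector_derivative_bounded) auto
  qed
qed

lemma dissipation_tendsto_0:
  assumes "kkt_point xs mu"
  shows "(dissipation xs \<longlongrightarrow> 0) at_top"
proof -
  obtain W where W: "potential xs W"
    using potential_exists assms unfolding kkt_point_def by blast
  note bounded = trajectory_bounded[OF assms] trajectory_derivatives_bounded[OF assms]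
  note uc = trajectory_uniformly_continuous[OF assms]
  have uc_G: "uniformly_continuous_on {0..} (\<lambda>t. G (x t))"
    by (rule uniformly_continuous_on_continuous_comp[OF uc(1) bounded(1) G_continuous])
  have uc_e: "uniformly_continuous_on {0..} (\<lambda>t. residual t i)" if "i < n" for i
    unfolding residual_def
    by (intro uniformly_continuous_on_diff uniformly_continuous_on_matrix_vector_mult uc
        uniformly_continuous_on_const that)
  have uc_dissipation: "uniformly_continuous_on {0..} (dissipation xs)"
    unfolding dissipation_def[abs_def] power2_norm_eq_inner
    by (intro uniformly_continuous_on_add uniformly_continuous_on_cmul_left uniformly_continuous_on_sum
        uniformly_continuous_on_inner uniformly_continuous_on_diff uc(1) uc_G uc_e
        uniformly_continuous_on_const bounded_minus_comp bounded bounded_const_comp) auto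
  show ?thesis
    using lyap_has_derivative[OF assms W] dissipation_nonneg lyap_nonneg uc_dissipation
    by (rule barbalat_integral)
qed

lemma gap_and_residual_tendsto_0:
  assumes "kkt_point xs mu"
  shows "((\<lambda>t. (x t - xs) \<bullet> (G (x t) - G xs)) \<longlongrightarrow> 0) at_top"
    and "\<And>i. i < n \<Longrightarrow> ((\<lambda>t. residual t i) \<longlongrightarrow> 0) at_top"
proof -
  note lim = dissipation_tendsto_0[OF assms]
  have "((\<lambda>t. \<alpha> * ((x t - xs) \<bullet> (G (x t) - G xs))) \<longlongrightarrow> 0) at_top"
    by (rule tendsto_sandwich[OF _ _ tendsto_const lim])
      (use \<alpha>_pos G_monotone in \<open>auto simp: dissipation_def sum_nonneg\<close>)
  then have "((\<lambda>t. (1 / \<alpha>) * (\<alpha> * ((x t - xs) \<bullet> (G (x t) - G xs)))) \<longlongrightarrow> (1 / \<alpha>) * 0) at_top"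
    by (intro tendsto_intros)
  then show "((\<lambda>t. (x t - xs) \<bullet> (G (x t) - G xs)) \<longlongrightarrow> 0) at_top"
    using \<alpha>_pos by simp
  show "((\<lambda>t. residual t i) \<longlongrightarrow> 0) at_top" if "i < n" for i
  proof -
    have "(norm (residual t i))\<^sup>2 \<le> dissipation xs t" for t
    proof -
      have "(norm (residual t i))\<^sup>2 \<le> (\<Sum>i<n. (norm (residual t i))\<^sup>2)"
        using that by (intro member_le_sum) auto
      moreover have "0 \<le> \<alpha> * ((x t - xs) \<bullet> (G (x t) - G xs))"
        using \<alpha>_pos G_monotone by simp
      ultimately show ?thesis
        unfolding dissipation_def by linarith
    qed
    then show ?thesis
      using tendsto_if_norm_power2_le[of "\<lambda>t. residual t i" 0 1 "dissipation xs"] lim by simp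
  qed
qed

lemma residual_deriv_tendsto_0:
  assumes "kkt_point xs mu" "i < n"
  shows "((\<lambda>t. A i *v xdot t - (\<alpha> * \<beta>) *\<^sub>R lap n a (lam t) i) \<longlongrightarrow> 0) at_top"
proof (rule barbalat[OF gap_and_residual_tendsto_0(2)[OF assms] residual_deriv[OF assms(2)]])
  note bounded = trajectory_bounded[OF assms(1)] trajectory_derivatives_bounded[OF assms(1)]
  note uc = trajectory_uniformly_continuous[OF assms(1)]
  have "uniformly_continuous_on {0..} (\<lambda>t. G (x t))"
    by (rule uniformly_continuous_on_continuous_comp[OF uc(1) bounded(1) G_continuous])
  moreover have "uniformly_continuous_on {0..} (\<lambda>t. residual t i)" if "i < n" for i
    unfolding residual_def
    by (intro uniformly_continuous_on_diff uniformly_continuous_on_matrix_vector_mult uc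
        uniformly_continuous_on_const that)
  ultimately have "uniformly_continuous_on {0..} xdot"
    unfolding xdot_def[abs_def]
    by (intro uniformly_continuous_on_diff uniformly_continuous_on_cmul uniformly_continuous_on_add
        uniformly_continuous_on_AT uc)
  then show "uniformly_continuous_on {0..} (\<lambda>t. A i *v xdot t - (\<alpha> * \<beta>) *\<^sub>R lap n a (lam t) i)"
    by (intro uniformly_continuous_on_diff uniformly_continuous_on_matrix_vector_mult
        uniformly_continuous_on_cmul uniformly_continuous_on_lap uc assms(2))
qed auto

lemma cluster_sequence_exists:
  assumes "kkt_point xs mu"
  obtains tk xb lb zb where "\<And>k. tk k \<ge> 0" "filterlim tk at_top sequentially"
    "(\<lambda>k. x (tk k)) \<longlonglongrightarrow> xb" "\<And>i. i < n \<Longrightarrow> (\<lambda>k. lam (tk k) i) \<longlonglongrightarrow> lb i"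
    "\<And>i. i < n \<Longrightarrow> (\<lambda>k. z (tk k) i) \<longlonglongrightarrow> zb i"
proof -
  note bounded = trajectory_bounded[OF assms]
  define Y where "Y k i = (if i < n then lam (real k) i else z (real k) (i - n))" for k i
  have "bounded (range (\<lambda>k. x (real k)))"
    by (rule bounded_subset[OF bounded(1)]) auto
  moreover have "bounded (range (\<lambda>k. Y k i))" if "i < n + n" for i
  proof (cases "i < n")
    case True
    show ?thesis
      by (rule bounded_subset[OF bounded(2)[OF True]]) (auto simp: Y_def True)
  next
    case False
    then have "i - n < n"
      using that by simp
    show ?thesis
      by (rule bounded_subset[OF bounded(3)[OF \<open>i - n < n\<close>]]) (auto simp: Y_def False)
  qed
  ultimately obtain r xb ly where r: "strict_mono r" "((\<lambda>k. x (real k)) \<circ> r) \<longlonglongrightarrow> xb"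
    "\<forall>i<n + n. (\<lambda>k. Y (r k) i) \<longlonglongrightarrow> ly i"
    using bounded_imp_convergent_subsequence_family[of "\<lambda>k. x (real k)" "n + n" Y] by blast
  show ?thesis
  proof (rule that[of "\<lambda>k. real (r k)" xb ly "\<lambda>i. ly (n + i)"])
    show "filterlim (\<lambda>k. real (r k)) at_top sequentially"
      by (rule filterlim_compose[OF filterlim_real_sequentially filterlim_subseq[OF r(1)]])
    show "(\<lambda>k. x (real (r k))) \<longlonglongrightarrow> xb"
      using r(2) by (simp add: o_def)
    show "(\<lambda>k. lam (real (r k)) i) \<longlonglongrightarrow> ly i" if "i < n" for i
      using r(3)[rule_format, of i] that by (simp add: Y_def)
    show "(\<lambda>k. z (real (r k)) i) \<longlonglongrightarrow> ly (n + i)" if "i < n" for i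
      using r(3)[rule_format, of "n + i"] that by (simp add: Y_def)
  qed simp
qed

context
  fixes xs mu tk xb lb zb
  assumes kkt: "kkt_point xs mu"
    and tk_nonneg: "\<And>k. tk k \<ge> 0" and tk: "filterlim tk at_top sequentially"
    and x_tk: "(\<lambda>k. x (tk k)) \<longlonglongrightarrow> xb"
    and lam_tk: "\<And>i. i < n \<Longrightarrow> (\<lambda>k. lam (tk k) i) \<longlonglongrightarrow> lb i"
    and z_tk: "\<And>i. i < n \<Longrightarrow> (\<lambda>k. z (tk k) i) \<longlonglongrightarrow> zb i"
begin

lemma tendsto_along_cluster: "(h \<longlongrightarrow> l) at_top \<Longrightarrow> (\<lambda>k. h (tk k)) \<longlonglongrightarrow> l"
  using filterlim_compose[OF _ tk] .

lemma cluster_z_eq: "i < n \<Longrightarrow> zb i = z_eq xb i"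
proof -
  assume "i < n"
  have "(\<lambda>k. residual (tk k) i) \<longlonglongrightarrow> A i *v xb - bb i - zb i"
    unfolding residual_def
    by (intro tendsto_diff bounded_linear.tendsto[OF matrix_vector_mul_bounded_linear] x_tk tendsto_const
        z_tk \<open>i < n\<close>)
  moreover have "(\<lambda>k. residual (tk k) i) \<longlonglongrightarrow> 0"
    by (rule tendsto_along_cluster[OF gap_and_residual_tendsto_0(2)[OF kkt \<open>i < n\<close>]])
  ultimately have "A i *v xb - bb i - zb i = 0"
    by (rule LIMSEQ_unique)
  then show ?thesis
    unfolding z_eq_def by (simp add: algebra_simps)
qed

lemma cluster_feasible: "(\<Sum>i<n. A i *v xb) = b"
proof -
  have "(\<lambda>k. \<Sum>i<n. z (tk k) i) \<longlonglongrightarrow> (\<Sum>i<n. zb i)"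
    by (intro tendsto_sum z_tk) simp
  moreover have "(\<lambda>k. \<Sum>i<n. z (tk k) i) = (\<lambda>k. 0)"
    using sum_z_eq_0 tk_nonneg by simp
  ultimately have "(\<Sum>i<n. zb i) = 0"
    by (simp add: LIMSEQ_const_iff)
  moreover have "(\<Sum>i<n. A i *v xb) = (\<Sum>i<n. bb i + zb i)"
    using cluster_z_eq by (intro sum.cong) (auto simp: z_eq_def)
  ultimately show ?thesis
    using bb_sum by (simp add: sum.distrib)
qed

lemma cluster_kkt_point: "kkt_point xb mu"
proof -
  have "isCont G u" for u
    using G_continuous by (simp add: continuous_on_eq_continuous_at)
  then have "(\<lambda>k. (x (tk k) - xs) \<bullet> (G (x (tk k)) - G xs)) \<longlonglongrightarrow> (xb - xs) \<bullet> (G xb - G xs)"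
    by (intro tendsto_inner tendsto_diff x_tk tendsto_const isCont_tendsto_compose[where g = G])
  moreover have "(\<lambda>k. (x (tk k) - xs) \<bullet> (G (x (tk k)) - G xs)) \<longlonglongrightarrow> 0"
    by (rule tendsto_along_cluster[OF gap_and_residual_tendsto_0(1)[OF kkt]])
  ultimately have "(xb - xs) \<bullet> (G xb - G xs) = 0"
    by (rule LIMSEQ_unique)
  then have "G xb = G xs"
    by (rule G_eq_if_monotone_gap_eq_0)
  then show ?thesis
    using kkt cluster_feasible unfolding kkt_point_def by simp
qed

lemma cluster_xdot_tendsto: "(\<lambda>k. xdot (tk k)) \<longlonglongrightarrow> - \<alpha> *\<^sub>R AT (\<lambda>i. lb i - mu)"
proof -
  have "isCont G xb"
    using G_continuous by (simp add: continuous_on_eq_continuous_at)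
  then have "(\<lambda>k. xdot (tk k)) \<longlonglongrightarrow> - \<alpha> *\<^sub>R (G xb + AT lb) - AT (\<lambda>i. A i *v xb - bb i - zb i)"
    unfolding xdot_def residual_def
    by (intro tendsto_diff tendsto_scaleR tendsto_const tendsto_add isCont_tendsto_compose[where g = G]
        x_tk tendsto_AT lam_tk bounded_linear.tendsto[OF matrix_vector_mul_bounded_linear] z_tk)
  moreover have "AT (\<lambda>i. A i *v xb - bb i - zb i) = AT (\<lambda>_. 0)"
    using cluster_z_eq by (intro AT_cong) (simp add: z_eq_def)
  moreover have "AT (\<lambda>_. 0) = 0"
    by (simp add: AT_def)
  moreover have "G xb + AT lb = AT (\<lambda>i. lb i - mu)"
  proof -
    have "G xb = - AT (\<lambda>_. mu)"
      using cluster_kkt_point unfolding kkt_point_def by (simp add: eq_neg_iff_add_eq_0)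
    then show ?thesis
      using AT_diff[of lb "\<lambda>_. mu"] by simp
  qed
  ultimately show ?thesis
    by simp
qed

lemma cluster_multiplier_eq:
  assumes "i < n"
  shows "A i *v AT (\<lambda>j. lb j - mu) = - \<beta> *\<^sub>R lap n a (\<lambda>j. lb j - mu) i"
proof -
  let ?S = "AT (\<lambda>j. lb j - mu)"
  have "(\<lambda>k. A i *v xdot (tk k) - (\<alpha> * \<beta>) *\<^sub>R lap n a (lam (tk k)) i) \<longlonglongrightarrow>
      A i *v (- \<alpha> *\<^sub>R ?S) - (\<alpha> * \<beta>) *\<^sub>R lap n a lb i"
    by (intro tendsto_diff bounded_linear.tendsto[OF matrix_vector_mul_bounded_linear] cluster_xdot_tendsto
        tendsto_scaleR tendsto_const tendsto_lap lam_tk assms)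
  moreover have "(\<lambda>k. A i *v xdot (tk k) - (\<alpha> * \<beta>) *\<^sub>R lap n a (lam (tk k)) i) \<longlonglongrightarrow> 0"
    by (rule tendsto_along_cluster[OF residual_deriv_tendsto_0[OF kkt assms]])
  ultimately have "A i *v (- \<alpha> *\<^sub>R ?S) - (\<alpha> * \<beta>) *\<^sub>R lap n a lb i = 0"
    by (rule LIMSEQ_unique)
  then have limit_eq: "(- \<alpha>) *\<^sub>R (A i *v ?S) - (\<alpha> * \<beta>) *\<^sub>R lap n a (\<lambda>j. lb j - mu) i = 0"
    unfolding matrix_vector_mult_scaleR lap_diff_const .
  have "\<alpha> *\<^sub>R (A i *v ?S + \<beta> *\<^sub>R lap n a (\<lambda>j. lb j - mu) i)
      = - ((- \<alpha>) *\<^sub>R (A i *v ?S) - (\<alpha> * \<beta>) *\<^sub>R lap n a (\<lambda>j. lb j - mu) i)"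
    by (simp add: algebra_simps)
  then have "\<alpha> *\<^sub>R (A i *v ?S + \<beta> *\<^sub>R lap n a (\<lambda>j. lb j - mu) i) = 0"
    unfolding limit_eq by simp
  then show ?thesis
    using \<alpha>_pos by (simp add: eq_neg_iff_add_eq_0)
qed

text \<open>With \<open>\<nu> = lb - mu\<close> and \<open>S = A\<^sup>T \<nu>\<close>, pairing \<open>A\<^sub>i S = - \<beta> (L \<nu>)\<^sub>i\<close> with \<open>\<nu>\<close> gives
  \<open>|S|\<^sup>2 + \<beta> \<nu>\<^sup>T L \<nu> = 0\<close>, so S = 0 and the multipliers at the cluster point agree.\<close>
lemma cluster_multiplier_consensus: "\<exists>mub. (\<forall>i<n. lb i = mub) \<and> kkt_point xb mub"
proof -
  define \<nu> where "\<nu> i = lb i - mu" for i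
  define S where "S = AT \<nu>"
  have "S \<bullet> S = (\<Sum>i<n. (A i *v S) \<bullet> \<nu> i)"
    unfolding S_def[symmetric] using inner_AT[of S \<nu>] S_def by simp
  also have "\<dots> = - \<beta> * lap_form n a \<nu>"
    using cluster_multiplier_eq unfolding S_def \<nu>_def[abs_def]
    by (simp add: lap_form_def sum_distrib_left inner_commute)
  finally have "S \<bullet> S + \<beta> * lap_form n a \<nu> = 0"
    by simp
  moreover have "0 \<le> S \<bullet> S" "0 \<le> \<beta> * lap_form n a \<nu>"
    using lap_form_nonneg[OF undir, of \<nu>] \<beta>_pos by simp_all
  ultimately have "S \<bullet> S = 0" "\<beta> * lap_form n a \<nu> = 0"
    by (simp_all add: add_nonneg_eq_0_iff)
  then have "S = 0" "lap_form n a \<nu> = 0"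
    using \<beta>_pos by simp_all
  then have consensus: "\<nu> i = \<nu> 0" if "i < n" for i
    using lap_form_eq_0_imp_consensus[OF undir conn _ that n_pos] by blast
  have "AT (\<lambda>_. \<nu> 0) = S"
    unfolding S_def by (intro AT_cong consensus[symmetric])
  then have "kkt_point xb (mu + \<nu> 0)"
    using cluster_kkt_point \<open>S = 0\<close> unfolding kkt_point_def AT_const_add by simp
  moreover have "lb i = mu + \<nu> 0" if "i < n" for i
    using consensus[OF that] unfolding \<nu>_def by (simp add: algebra_simps)
  ultimately show ?thesis
    by blast
qed

lemma lyap_tendsto_0_along_cluster:
  assumes "kkt_point xb mub" "\<And>i. i < n \<Longrightarrow> lb i = mub" "potential xb W"
  shows "(\<lambda>k. lyap xb mub W (tk k)) \<longlonglongrightarrow> 0"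
proof -
  obtain CQ where CQ: "\<And>w::nat \<Rightarrow> real^'p. lap_form n a w \<le> CQ * (\<Sum>i<n. norm (lap n a w i))\<^sup>2"
    by (rule lap_form_le_norm_lap[OF undir conn n_pos]) blast
  have "(\<lambda>k. (norm (x (tk k) - xb))\<^sup>2 / 2) \<longlonglongrightarrow> (norm (xb - xb))\<^sup>2 / 2"
    by (intro tendsto_intros x_tk) simp
  moreover have "(\<lambda>k. (\<Sum>i<n. (norm (\<alpha> *\<^sub>R (lam (tk k) i - mub) + (z (tk k) i - z_eq xb i)))\<^sup>2) / (2 * \<alpha>))
      \<longlonglongrightarrow> (\<Sum>i<n. (norm (\<alpha> *\<^sub>R (lb i - mub) + (zb i - z_eq xb i)))\<^sup>2) / (2 * \<alpha>)"
  proof (rule tendsto_divide[OF _ tendsto_const])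
    show "(\<lambda>k. \<Sum>i<n. (norm (\<alpha> *\<^sub>R (lam (tk k) i - mub) + (z (tk k) i - z_eq xb i)))\<^sup>2)
        \<longlonglongrightarrow> (\<Sum>i<n. (norm (\<alpha> *\<^sub>R (lb i - mub) + (zb i - z_eq xb i)))\<^sup>2)"
      by (intro tendsto_sum tendsto_power tendsto_norm tendsto_add tendsto_scaleR tendsto_diff tendsto_const
          lam_tk z_tk) auto
  qed (use \<alpha>_pos in simp)
  moreover have "(\<lambda>k. lap_form n a (W (tk k)) / (2 * \<beta>)) \<longlonglongrightarrow> 0 / (2 * \<beta>)"
  proof (rule tendsto_divide[OF _ tendsto_const])
    have "(\<lambda>k. CQ * (\<Sum>i<n. norm (z (tk k) i - z_eq xb i))\<^sup>2) \<longlonglongrightarrow> CQ * (\<Sum>i<n. norm (zb i - z_eq xb i))\<^sup>2"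
      by (intro tendsto_intros z_tk) auto
    then have upper: "(\<lambda>k. CQ * (\<Sum>i<n. norm (z (tk k) i - z_eq xb i))\<^sup>2) \<longlonglongrightarrow> 0"
      using cluster_z_eq by simp
    have "lap_form n a (W (tk k)) \<le> CQ * (\<Sum>i<n. norm (z (tk k) i - z_eq xb i))\<^sup>2" for k
    proof -
      have "(\<Sum>i<n. norm (lap n a (W (tk k)) i)) = (\<Sum>i<n. norm (z (tk k) i - z_eq xb i))"
        using assms(3) tk_nonneg unfolding potential_def by (intro sum.cong) auto
      then show ?thesis
        using CQ[of "W (tk k)"] by simp
    qed
    then have ev_upper: "\<forall>\<^sub>F k in sequentially.
        lap_form n a (W (tk k)) \<le> CQ * (\<Sum>i<n. norm (z (tk k) i - z_eq xb i))\<^sup>2"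
      by simp
    have ev_lower: "\<forall>\<^sub>F k in sequentially. 0 \<le> lap_form n a (W (tk k))"
      by (simp add: lap_form_nonneg[OF undir])
    show "(\<lambda>k. lap_form n a (W (tk k))) \<longlonglongrightarrow> 0"
      by (rule tendsto_sandwich[OF ev_lower ev_upper tendsto_const upper])
  qed (use \<beta>_pos in simp)
  ultimately have "(\<lambda>k. lyap xb mub W (tk k)) \<longlonglongrightarrow>
      (norm (xb - xb))\<^sup>2 / 2 + (\<Sum>i<n. (norm (\<alpha> *\<^sub>R (lb i - mub) + (zb i - z_eq xb i)))\<^sup>2) / (2 * \<alpha>) + 0 / (2 * \<beta>)"
    unfolding lyap_def by (intro tendsto_add)
  then show ?thesis
    using assms(2) cluster_z_eq \<alpha>_pos by simp
qed

end

lemma trajectory_tendsto_if_lyap_tendsto_0: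
  assumes "potential xq W" "(lyap xq mq W \<longlongrightarrow> 0) at_top"
  shows "(x \<longlongrightarrow> xq) at_top" "\<And>i. i < n \<Longrightarrow> ((\<lambda>t. z t i) \<longlongrightarrow> z_eq xq i) at_top"
    "\<And>i. i < n \<Longrightarrow> ((\<lambda>t. lam t i) \<longlongrightarrow> mq) at_top"
proof -
  show "(x \<longlongrightarrow> xq) at_top"
    using lyap_bounds(1) assms(2) by (rule tendsto_if_norm_power2_le)
  obtain C where C: "\<And>xq mq W t i. potential xq W \<Longrightarrow> t \<ge> 0 \<Longrightarrow> i < n \<Longrightarrow>
      norm (z t i - z_eq xq i) \<le> C * sqrt (lyap xq mq W t)"
    by (rule norm_z_sub_z_eq_le_lyap) blast
  show z_lim: "((\<lambda>t. z t i) \<longlongrightarrow> z_eq xq i) at_top" if "i < n" for i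
  proof (rule tendsto_if_norm_power2_le[OF _ assms(2)])
    fix t :: real assume "t \<ge> 0"
    have "(norm (z t i - z_eq xq i))\<^sup>2 \<le> (C * sqrt (lyap xq mq W t))\<^sup>2"
      using C[OF assms(1) \<open>t \<ge> 0\<close> that] by (intro power_mono) auto
    then show "(norm (z t i - z_eq xq i))\<^sup>2 \<le> C\<^sup>2 * lyap xq mq W t"
      using lyap_nonneg[of xq mq W t] by (simp add: power_mult_distrib)
  qed
  show "((\<lambda>t. lam t i) \<longlongrightarrow> mq) at_top" if "i < n" for i
  proof -
    have "((\<lambda>t. \<alpha> *\<^sub>R (lam t i - mq) + (z t i - z_eq xq i)) \<longlongrightarrow> 0) at_top"
    proof (rule tendsto_if_norm_power2_le[OF _ assms(2)])
      show "(norm (\<alpha> *\<^sub>R (lam t i - mq) + (z t i - z_eq xq i) - 0))\<^sup>2 \<le> 2 * \<alpha> * lyap xq mq W t" for t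
        using lyap_bounds(2)[OF that] by simp
    qed
    moreover have "((\<lambda>t. z t i - z_eq xq i) \<longlongrightarrow> 0) at_top"
      using z_lim[OF that] by (rule LIM_zero)
    ultimately have "((\<lambda>t. (1 / \<alpha>) *\<^sub>R ((\<alpha> *\<^sub>R (lam t i - mq) + (z t i - z_eq xq i)) - (z t i - z_eq xq i)))
        \<longlongrightarrow> (1 / \<alpha>) *\<^sub>R (0 - 0)) at_top"
      by (intro tendsto_intros)
    then have "((\<lambda>t. lam t i - mq) \<longlongrightarrow> 0) at_top"
      using \<alpha>_pos by simp
    then show ?thesis
      by (rule LIM_zero_cancel)
  qed
qed

theorem trajectory_converges:
  "\<exists>xs ls zs. (x \<longlongrightarrow> xs) at_top
     \<and> (\<forall>i<n. ((\<lambda>t. lam t i) \<longlongrightarrow> ls i) at_top)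
     \<and> (\<forall>i<n. ((\<lambda>t. z t i) \<longlongrightarrow> zs i) at_top)
     \<and> (\<Sum>i<n. A i *v xs) = b
     \<and> (\<forall>v. (\<Sum>i<n. A i *v v) = b \<longrightarrow> (\<Sum>i<n. f i xs) \<le> (\<Sum>i<n. f i v))"
proof -
  obtain xs mu where kkt: "kkt_point xs mu"
    using kkt_point_exists by blast
  obtain tk xb lb zb where cluster: "\<And>k. tk k \<ge> 0" "filterlim tk at_top sequentially"
    "(\<lambda>k. x (tk k)) \<longlonglongrightarrow> xb" "\<And>i. i < n \<Longrightarrow> (\<lambda>k. lam (tk k) i) \<longlonglongrightarrow> lb i"
    "\<And>i. i < n \<Longrightarrow> (\<lambda>k. z (tk k) i) \<longlonglongrightarrow> zb i"
    by (rule cluster_sequence_exists[OF kkt]) (rule that)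
  obtain mub where lb: "\<And>i. i < n \<Longrightarrow> lb i = mub" and kkt_b: "kkt_point xb mub"
    using cluster_multiplier_consensus[OF kkt cluster] by blast
  obtain W where W: "potential xb W"
    using potential_exists kkt_b unfolding kkt_point_def by blast
  have "(lyap xb mub W \<longlongrightarrow> 0) at_top"
    using lyap_decreasing[OF kkt_b W] lyap_nonneg cluster(2)
      lyap_tendsto_0_along_cluster[OF kkt cluster kkt_b lb W]
    by (rule antimono_tendsto_0_if_tendsto_0_along)
  note lim = trajectory_tendsto_if_lyap_tendsto_0[OF W this]
  have "(\<Sum>i<n. A i *v xb) = b"
    using kkt_b unfolding kkt_point_def by simp
  then show ?thesis
    using lim kkt_point_optimal[OF kkt_b] unfolding F_def
    by (intro exI[of _ xb] exI[of _ "\<lambda>_. mub"] exI[of _ "z_eq xb"]) auto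
qed

end

theorem theorem1:
  fixes n :: nat
    and blk :: "'d::finite \<Rightarrow> nat"
    and f :: "nat \<Rightarrow> real^'d \<Rightarrow> real"
    and g :: "nat \<Rightarrow> real^'d \<Rightarrow> real^'d"
    and A :: "nat \<Rightarrow> real^'d^'p::finite"
    and b :: "real^'p"
    and bb :: "nat \<Rightarrow> real^'p"
    and a :: "nat \<Rightarrow> nat \<Rightarrow> real"
    and \<alpha> \<beta> :: real
    and x :: "real \<Rightarrow> real^'d"
    and lam z :: "real \<Rightarrow> nat \<Rightarrow> real^'p"
  assumes blk: "\<forall>k. blk k < n"
    and f_local: "\<forall>i<n. \<forall>u v. (\<forall>k. blk k = i \<longrightarrow> u $ k = v $ k) \<longrightarrow> f i u = f i v"
    and A_local: "\<forall>i<n. \<forall>r k. blk k \<noteq> i \<longrightarrow> A i $ r $ k = 0"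
    and f_convex: "\<forall>i<n. convex_on UNIV (f i)"
    and f_grad: "\<forall>i<n. \<forall>u. (f i has_derivative (\<lambda>h. g i u \<bullet> h)) (at u)"
    and g_lip: "\<forall>i<n. loc_lipschitz_on UNIV (g i)"
    and opt_exists: "\<exists>u. (\<Sum>i<n. A i *v u) = b \<and>
                       (\<forall>v. (\<Sum>i<n. A i *v v) = b \<longrightarrow> (\<Sum>i<n. f i u) \<le> (\<Sum>i<n. f i v))"
    and bb_sum: "(\<Sum>i<n. bb i) = b"
    and undir: "undirected_graph n a"
    and conn: "graph_connected n a"
    and \<alpha>_pos: "\<alpha> > 0" and \<beta>_pos: "\<beta> > 0"
    and z0: "(\<Sum>i<n. z 0 i) = 0"
    and x_ode: "\<forall>t\<ge>0. (x has_vector_derivative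
        (- \<alpha> *\<^sub>R ((\<Sum>i<n. g i (x t)) + (\<Sum>i<n. transpose (A i) *v lam t i))
         - (\<Sum>i<n. transpose (A i) *v (A i *v x t - bb i - z t i)))) (at t within {0..})"
    and lam_ode: "\<forall>i<n. \<forall>t\<ge>0. ((\<lambda>s. lam s i) has_vector_derivative
        (A i *v x t - bb i - z t i - \<beta> *\<^sub>R lap n a (lam t) i)) (at t within {0..})"
    and z_ode: "\<forall>i<n. \<forall>t\<ge>0. ((\<lambda>s. z s i) has_vector_derivative
        ((\<alpha> * \<beta>) *\<^sub>R lap n a (lam t) i)) (at t within {0..})"
  shows "\<exists>xs ls zs. (x \<longlongrightarrow> xs) at_top
           \<and> (\<forall>i<n. ((\<lambda>t. lam t i) \<longlongrightarrow> ls i) at_top)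
           \<and> (\<forall>i<n. ((\<lambda>t. z t i) \<longlongrightarrow> zs i) at_top)
           \<and> (\<Sum>i<n. A i *v xs) = b
           \<and> (\<forall>v. (\<Sum>i<n. A i *v v) = b \<longrightarrow> (\<Sum>i<n. f i xs) \<le> (\<Sum>i<n. f i v))"
proof -
  have "blk undefined < n"
    using blk by blast
  then have "n > 0"
    by simp
  then interpret idea_flow n f g A b bb a \<alpha> \<beta> x lam z
    using f_convex f_grad g_lip opt_exists bb_sum undir conn \<alpha>_pos \<beta>_pos z0 x_ode lam_ode z_ode
    by (rule idea_flow.intro)
  show ?thesis
    by (rule trajectory_converges)
qed

end
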